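(* Let $\eta_0$ be a covariance function on $\mathbb{R}$ with $\eta_0\in L^1([-1,1])$ and $\eta$ a generalized covariance function on $\mathbb{R}^\ell$ whose spectral measure $\nu$ satisfies $\int_{\mathbb{R}^\ell}\frac{\nu(d\xi)}{1+|\xi|^2}<\infty$. Then $\mathcal{E}(\eta_0,\eta)<\infty$. More precisely, if $R>0$ is such that $\|\eta_0\|_{L^1([-1,1])}(2\pi)^{-\ell}4\ell\int_{|\xi|>R}\frac{\nu(d\xi)}{|\xi|^2}<\frac12$, then $\mathcal{E}(\eta_0,\eta)\le\|\eta_0\|_{L^1([-1,1])}(2\pi)^{-\ell}\int_{|\xi|\le R}\nu(d\xi)$.
   Context: A covariance function on $\mathbb{R}$ is a nonnegative, nonnegative definite, locally integrable function. A generalized covariance function on $\mathbb{R}^\ell$ is a (generalized) function $\eta$ whose Fourier transform is a nonnegative tempered measure $\nu$ (its spectral measure), i.e. $\eta(x)=(2\pi)^{-\ell}\int e^{i\xi\cdot x}\nu(d\xi)$. Let $\mathcal{A}_\ell$ be the set of functions $g$ on $[0,1]\times\mathbb{R}^\ell$ with $g(s,\cdot)\in W^{1,2}(\mathbb{R}^\ell)$ and $\int g^2(s,x)dx=1$ for all $s\in[0,1]$. Define $$\mathcal{E}(\eta_0,\eta)=\sup_{g\in\mathcal{A}_\ell}\Big\{\int_{[0,1]^2}\int_{\mathbb{R}^{2\ell}}\eta(x-y)\eta_0(s-r)g^2(s,x)g^2(r,y)dxdydrds-\frac12\int_0^1\int_{\mathbb{R}^\ell}|\nabla_xg(s,x)|^2dxds\Big\},$$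 where the first integral is defined as $(2\pi)^{-\ell}\int_{[0,1]^2}\int_{\mathbb{R}^\ell}\mathcal{F}g^2(s,\cdot)(\xi)\overline{\mathcal{F}g^2(r,\cdot)(\xi)}\nu(d\xi)\eta_0(s-r)drds$, with $\mathcal{F}u(\xi)=\int e^{-i\xi\cdot x}u(x)dx$. *)

theory Defs
  imports "HOL-Analysis.Analysis"
begin

definition cc_fun_real :: "(real \<Rightarrow> complex) \<Rightarrow> bool" where
  "cc_fun_real \<phi> \<longleftrightarrow> continuous_on UNIV \<phi> \<and> bounded {t. \<phi> t \<noteq> 0}"

definition nonneg_definite :: "(real \<Rightarrow> real) \<Rightarrow> bool" where
  "nonneg_definite \<eta>0 \<longleftrightarrow>
     (\<forall>\<phi>. cc_fun_real \<phi> \<longrightarrow>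
        (let I = (\<integral>s. (\<integral>r. complex_of_real (\<eta>0 (s - r)) * \<phi> s * cnj (\<phi> r) \<partial>lborel) \<partial>lborel)
         in Im I = 0 \<and> Re I \<ge> 0))"

definition locally_integrable :: "(real \<Rightarrow> real) \<Rightarrow> bool" where
  "locally_integrable f \<longleftrightarrow> f \<in> borel_measurable lborel \<and>
     (\<forall>K. compact K \<longrightarrow> set_integrable lborel K f)"

definition covariance_function :: "(real \<Rightarrow> real) \<Rightarrow> bool" where
  "covariance_function \<eta>0 \<longleftrightarrow>
     (\<forall>t. \<eta>0 t \<ge> 0) \<and> nonneg_definite \<eta>0 \<and> locally_integrable \<eta>0"

definition C1c_test :: "('a::euclidean_space \<Rightarrow> real) \<Rightarrow> ('a \<Rightarrow> 'a \<Rightarrow> real) \<Rightarrow> bool" where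
  "C1c_test \<phi> D\<phi> \<longleftrightarrow> (\<forall>x. (\<phi> has_derivative D\<phi> x) (at x)) \<and>
     (\<forall>b\<in>Basis. continuous_on UNIV (\<lambda>x. D\<phi> x b)) \<and> bounded {x. \<phi> x \<noteq> 0}"

definition weak_gradient :: "('a::euclidean_space \<Rightarrow> real) \<Rightarrow> ('a \<Rightarrow> 'a) \<Rightarrow> bool" where
  "weak_gradient u G \<longleftrightarrow>
     (\<forall>\<phi> D\<phi> b. C1c_test \<phi> D\<phi> \<longrightarrow> b \<in> Basis \<longrightarrow>
        (\<integral>x. u x * D\<phi> x b \<partial>lborel) = - (\<integral>x. (G x \<bullet> b) * \<phi> x \<partial>lborel))"

definition W12_with_grad :: "('a::euclidean_space \<Rightarrow> real) \<Rightarrow> ('a \<Rightarrow> 'a) \<Rightarrow> bool" where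
  "W12_with_grad u G \<longleftrightarrow>
     u \<in> borel_measurable lborel \<and> integrable lborel (\<lambda>x. (u x)\<^sup>2) \<and>
     G \<in> borel_measurable lborel \<and> integrable lborel (\<lambda>x. (norm (G x))\<^sup>2) \<and>
     weak_gradient u G"

definition W12 :: "('a::euclidean_space \<Rightarrow> real) \<Rightarrow> bool" where
  "W12 u \<longleftrightarrow> (\<exists>G. W12_with_grad u G)"

text \<open>Pairs (g, grad_x g): g(s,.) in W^{1,2} with weak gradient G(s,.) and unit L^2 norm
  for every s in [0,1]; g and G jointly measurable and the Dirichlet term finite
  (needed for the integrals in the definition of E to make sense).\<close>
definition admissible :: "(real \<Rightarrow> 'a::euclidean_space \<Rightarrow> real) \<Rightarrow> (real \<Rightarrow> 'a \<Rightarrow> 'a) \<Rightarrow> bool" where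
  "admissible g G \<longleftrightarrow>
     (\<forall>s\<in>{0..1}. W12_with_grad (g s) (G s) \<and> (\<integral>x. (g s x)\<^sup>2 \<partial>lborel) = 1) \<and>
     (\<lambda>(s, x). g s x) \<in> borel_measurable (lborel \<Otimes>\<^sub>M lborel) \<and>
     (\<lambda>(s, x). G s x) \<in> borel_measurable (lborel \<Otimes>\<^sub>M lborel) \<and>
     (\<integral>\<^sup>+ s. indicator {0..1} s * (\<integral>\<^sup>+ x. ennreal ((norm (G s x))\<^sup>2) \<partial>lborel) \<partial>lborel) < \<infinity>"

definition fourier :: "('a::euclidean_space \<Rightarrow> real) \<Rightarrow> 'a \<Rightarrow> complex" where
  "fourier u \<xi> = (\<integral>x. cis (- (\<xi> \<bullet> x)) * complex_of_real (u x) \<partial>lborel)"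

text \<open>The interaction term, written through the spectral measure nu of eta.\<close>
definition interaction :: "(real \<Rightarrow> real) \<Rightarrow> 'a::euclidean_space measure \<Rightarrow> (real \<Rightarrow> 'a \<Rightarrow> real) \<Rightarrow> real" where
  "interaction \<eta>0 \<nu> g =
     (2 * pi) powi (- int DIM('a)) *
     Re (set_lebesgue_integral lborel {0..1} (\<lambda>s. set_lebesgue_integral lborel {0..1} (\<lambda>r.
           (\<integral>\<xi>. fourier (\<lambda>x. (g s x)\<^sup>2) \<xi> * cnj (fourier (\<lambda>x. (g r x)\<^sup>2) \<xi>) \<partial>\<nu>)
           * complex_of_real (\<eta>0 (s - r)))))"

definition dirichlet :: "(real \<Rightarrow> 'a::euclidean_space \<Rightarrow> 'a) \<Rightarrow> real" where
  "dirichlet G = set_lebesgue_integral lborel {0..1} (\<lambda>s. \<integral>x. (norm (G s x))\<^sup>2 \<partial>lborel)"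

definition calE :: "(real \<Rightarrow> real) \<Rightarrow> 'a::euclidean_space measure \<Rightarrow> ereal" where
  "calE \<eta>0 \<nu> = (SUP gG \<in> {(g, G). admissible g G}.
       ereal (interaction \<eta>0 \<nu> (fst gG) - 1/2 * dirichlet (snd gG)))"

text \<open>Spectral measures: nonnegative Borel measures on R^l (tempered).\<close>
definition tempered_measure :: "'a::euclidean_space measure \<Rightarrow> bool" where
  "tempered_measure \<nu> \<longleftrightarrow> sets \<nu> = sets borel \<and>
     (\<exists>k::nat. (\<integral>\<^sup>+ \<xi>. ennreal (1 / (1 + (norm \<xi>)\<^sup>2) ^ k) \<partial>\<nu>) < \<infinity>)"

end

theory Submission
  imports Defs
begin

(*
  For u in W^{1,2} with int u^2 = 1 the Fourier transform F of u^2 satisfies |F| <= 1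
  and |xi|^2 |F xi|^2 <= 4 int |grad u|^2.  Indeed, translating u^2 by t b multiplies F by
  cis (t (xi . b)), and the L^1 norm of u(. + t b)^2 - u^2 is at most
  ||u(. + t b) - u||_2 ||u(. + t b) + u||_2 <= 2 |t| ||d_b u||_2; the L^2 bound on the difference
  quotient follows by duality from the weak-gradient identity tested against translated C^1
  functions with compact support.  Splitting the spectral integral at |xi| = R thus bounds
  |F(g_s^2)(xi) F(g_r^2)(xi)| by 1 for |xi| <= R and by 2 (||grad g_s||^2 + ||grad g_r||^2) / |xi|^2
  for |xi| > R.  Integrating against eta0(s - r), whose integrals in s and in r over [0, 1] are at
  most ||eta0||_{L^1[-1,1]}, gives
    interaction <= (2 pi)^-l ||eta0|| (nu {|xi| <= R} + 4 J(R) int_0^1 ||grad g_s||^2 ds),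
  with J(R) = int_{|xi| > R} nu(d xi) / |xi|^2.  Once (2 pi)^-l ||eta0|| 4 J(R) <= 1/2 the gradient
  part is absorbed by the Dirichlet term, and such an R exists because J(R) tends to 0 by dominated
  convergence.
*)

section \<open>Approximation by test functions and L2 duality\<close>

definition pos_part_sq :: "real \<Rightarrow> real" where
  "pos_part_sq t = (max 0 t)\<^sup>2"

lemma pos_part_sq_has_real_derivative: "(pos_part_sq has_real_derivative 2 * max 0 t) (at t)"
proof (cases t "0::real" rule: linorder_cases)
  case less
  have "((\<lambda>x. 0) has_real_derivative 2 * max 0 t) (at t)" using less by simp
  then show ?thesis
    by (rule has_field_derivative_transform_within_open[where S="{..<0}"])
       (use less in \<open>auto simp: pos_part_sq_def\<close>)
next
  case equal
  have "((\<lambda>h. (pos_part_sq (0 + h) - pos_part_sq 0) / h) \<longlongrightarrow> 0) (at 0)"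
  proof (rule Lim_null_comparison)
    show "\<forall>\<^sub>F h in at 0. norm ((pos_part_sq (0 + h) - pos_part_sq 0) / h) \<le> norm h"
      by (auto simp: pos_part_sq_def power2_eq_square abs_mult divide_simps max_def)
  qed (intro tendsto_eq_intros; simp)
  then show ?thesis using equal by (simp add: DERIV_def)
next
  case greater
  have "((\<lambda>x. x\<^sup>2) has_real_derivative 2 * max 0 t) (at t)"
    using greater by (auto intro!: derivative_eq_intros)
  then show ?thesis
    by (rule has_field_derivative_transform_within_open[where S="{0<..}"])
       (use greater in \<open>auto simp: pos_part_sq_def\<close>)
qed

lemma continuous_on_pos_part_sq: "continuous_on UNIV pos_part_sq"
  unfolding pos_part_sq_def by (intro continuous_intros)

lemma real_polynomial_function_has_continuous_derivative:
  fixes p :: "'a::euclidean_space \<Rightarrow> real"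
  assumes "real_polynomial_function p"
  shows "\<exists>Dp. (\<forall>x. (p has_derivative Dp x) (at x)) \<and> (\<forall>v. continuous_on UNIV (\<lambda>x. Dp x v))"
  using assms
proof (induction p rule: real_polynomial_function.induct)
  case (linear f)
  then show ?case by (intro exI[of _ "\<lambda>x. f"]) (auto intro: bounded_linear_imp_has_derivative)
next
  case (const c)
  then show ?case by (intro exI[of _ "\<lambda>x h. 0"]) auto
next
  case (add f g)
  then obtain Df Dg where "\<forall>x. (f has_derivative Df x) (at x)" "\<forall>v. continuous_on UNIV (\<lambda>x. Df x v)"
    "\<forall>x. (g has_derivative Dg x) (at x)" "\<forall>v. continuous_on UNIV (\<lambda>x. Dg x v)" by blast
  then show ?case
    by (intro exI[of _ "\<lambda>x h. Df x h + Dg x h"]) (auto intro!: derivative_eq_intros continuous_intros)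
next
  case (mult f g)
  then obtain Df Dg where D: "\<forall>x. (f has_derivative Df x) (at x)" "\<forall>v. continuous_on UNIV (\<lambda>x. Df x v)"
    "\<forall>x. (g has_derivative Dg x) (at x)" "\<forall>v. continuous_on UNIV (\<lambda>x. Dg x v)" by blast
  have "continuous_on UNIV f" "continuous_on UNIV g"
    using mult.hyps continuous_real_polymonial_function continuous_at_imp_continuous_on by blast+
  with D show ?case
    by (intro exI[of _ "\<lambda>x h. f x * Dg x h + Df x h * g x"])
       (auto intro!: derivative_eq_intros continuous_intros)
qed

lemma bounded_measurable_ae_limit_of_continuous:
  fixes w :: "'a::euclidean_space \<Rightarrow> real"
  assumes "w \<in> borel_measurable lborel" and w_bound: "\<And>x. \<bar>w x\<bar> \<le> B"
    and w_support: "\<And>x. norm x > r \<Longrightarrow> w x = 0"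
  obtains c where "\<And>n. continuous_on UNIV (c n)" "\<And>n x. \<bar>c n x\<bar> \<le> B"
    "\<And>n x. norm x \<ge> r + 1 \<Longrightarrow> c n x = 0" "AE x in lborel. (\<lambda>n. c n x) \<longlonglongrightarrow> w x"
proof -
  have B: "B \<ge> 0" using w_bound[of 0] by linarith
  have "w \<in> borel_measurable lebesgue" using assms(1) by (rule measurable_completion)
  then have "w measurable_on UNIV" by (rule lebesgue_measurable_imp_measurable_on) simp
  then obtain N g where N: "negligible N" and g: "\<And>n. continuous_on UNIV (g n)"
    and g_lim: "\<And>x. x \<notin> N \<Longrightarrow> (\<lambda>n. g n x) \<longlonglongrightarrow> w x"
    unfolding measurable_on_def by auto
  define cutoff where "cutoff x = max 0 (min 1 (r + 1 - norm x))" for x :: 'a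
  define c where "c n x = max (-B) (min B (g n x)) * cutoff x" for n x
  show ?thesis
  proof (rule that[of c])
    show "continuous_on UNIV (c n)" for n
      unfolding c_def cutoff_def by (intro continuous_intros g)
    show "\<bar>c n x\<bar> \<le> B" for n x
    proof -
      have "\<bar>max (-B) (min B (g n x))\<bar> * \<bar>cutoff x\<bar> \<le> B * 1"
        using B by (intro mult_mono) (auto simp: cutoff_def)
      then show ?thesis by (simp add: c_def abs_mult)
    qed
    show "norm x \<ge> r + 1 \<Longrightarrow> c n x = 0" for n x
      unfolding c_def cutoff_def by auto
    have "AE x in lborel. x \<notin> N"
      using AE_not_in[of N lebesgue] N negligible_iff_null_sets AE_completion_iff by blast
    then show "AE x in lborel. (\<lambda>n. c n x) \<longlonglongrightarrow> w x"
    proof eventually_elim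
      case (elim x)
      have "(\<lambda>n. max (-B) (min B (g n x)) * cutoff x) \<longlonglongrightarrow> max (-B) (min B (w x)) * cutoff x"
        by (intro tendsto_intros g_lim elim)
      moreover have "max (-B) (min B (w x)) * cutoff x = w x"
        using w_bound[of x] w_support[of x] B by (cases "norm x > r") (auto simp: cutoff_def)
      ultimately show ?case unfolding c_def by simp
    qed
  qed
qed

definition ball_bump :: "real \<Rightarrow> 'a::real_inner \<Rightarrow> real" where
  "ball_bump \<rho> x = pos_part_sq (\<rho>\<^sup>2 - x \<bullet> x)"

lemma continuous_on_ball_bump: "continuous_on UNIV (ball_bump \<rho>)"
  unfolding ball_bump_def
  by (intro continuous_on_compose2[OF continuous_on_pos_part_sq] continuous_intros) auto

lemma ball_bump_pos: "norm x < \<rho> \<Longrightarrow> ball_bump \<rho> x > 0"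
proof -
  assume "norm x < \<rho>"
  then have "x \<bullet> x < \<rho>\<^sup>2"
    by (metis norm_ge_zero power2_norm_eq_inner power_strict_mono zero_less_numeral)
  then show ?thesis unfolding ball_bump_def pos_part_sq_def by auto
qed

lemma ball_bump_eq_0: "0 \<le> \<rho> \<Longrightarrow> \<rho> \<le> norm x \<Longrightarrow> ball_bump \<rho> x = 0"
proof -
  assume "0 \<le> \<rho>" "\<rho> \<le> norm x"
  then have "\<rho>\<^sup>2 \<le> x \<bullet> x" by (metis power2_norm_eq_inner power_mono)
  then show ?thesis unfolding ball_bump_def pos_part_sq_def by auto
qed

lemma ball_bump_le: "ball_bump \<rho> x \<le> \<rho>^4"
proof -
  have "(max 0 (\<rho>\<^sup>2 - x \<bullet> x))\<^sup>2 \<le> (\<rho>\<^sup>2)\<^sup>2" by (intro power_mono) auto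
  then show ?thesis unfolding ball_bump_def pos_part_sq_def by (simp add: power_mult[symmetric])
qed

lemma ball_bump_has_derivative:
  "(ball_bump \<rho> has_derivative (\<lambda>h. (- (h \<bullet> x + x \<bullet> h)) * (2 * max 0 (\<rho>\<^sup>2 - x \<bullet> x)))) (at x)"
  unfolding ball_bump_def
  by (rule DERIV_compose_FDERIV[OF pos_part_sq_has_real_derivative]) (auto intro!: derivative_eq_intros)

lemma C1c_uniform_approximation:
  fixes c :: "'a::euclidean_space \<Rightarrow> real"
  assumes c: "continuous_on UNIV c" and c_support: "\<And>x. norm x \<ge> r \<Longrightarrow> c x = 0"
    and "r \<ge> 0" and "e > 0"
  obtains \<phi> D\<phi> where "C1c_test \<phi> D\<phi>" "\<And>x. \<bar>\<phi> x - c x\<bar> \<le> e"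
    "\<And>x. norm x \<ge> r + 1 \<Longrightarrow> \<phi> x = 0"
proof -
  \<comment> \<open>write c = bump * (c / bump) and approximate the continuous quotient by a polynomial
    (Stone-Weierstrass)\<close>
  define \<rho> where "\<rho> = r + 1"
  have \<rho>: "\<rho> > 0" "r < \<rho>" using \<open>r \<ge> 0\<close> by (auto simp: \<rho>_def)
  define bump :: "'a \<Rightarrow> real" where "bump = ball_bump \<rho>"
  have bump_cont: "continuous_on UNIV bump" unfolding bump_def by (rule continuous_on_ball_bump)
  have bump_pos: "bump x > 0" if "norm x < \<rho>" for x
    unfolding bump_def using that by (rule ball_bump_pos)
  have bump_zero: "bump x = 0" if "norm x \<ge> \<rho>" for x
    unfolding bump_def using \<rho>(1) that by (intro ball_bump_eq_0) simp_all
  have bump_le: "bump x \<le> \<rho>^4" for x unfolding bump_def by (rule ball_bump_le)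
  have bump_has_derivative: "(bump has_derivative
      (\<lambda>h. (- (h \<bullet> x + x \<bullet> h)) * (2 * max 0 (\<rho>\<^sup>2 - x \<bullet> x)))) (at x)" for x
    unfolding bump_def by (rule ball_bump_has_derivative)
  define q where "q x = c x / bump x" for x
  have q_cont: "continuous_on UNIV q"
  proof -
    have "continuous_on (ball 0 \<rho>) q" unfolding q_def
      by (intro continuous_intros continuous_on_subset[OF c] continuous_on_subset[OF bump_cont])
         (auto, metis bump_pos less_irrefl)
    moreover have "continuous_on (- cball 0 r) q"
      by (rule continuous_on_eq[OF continuous_on_const[of _ 0]]) (auto simp: q_def c_support)
    moreover have "ball 0 \<rho> \<union> (- cball 0 r) = UNIV" using \<rho> by auto
    ultimately show ?thesis
      using continuous_on_open_Un[of "ball 0 \<rho>" "- cball 0 r" q] by (metis open_ball open_Compl closed_cball)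
  qed
  have "e / (\<rho>^4 + 1) > 0" using \<open>e > 0\<close> by (intro divide_pos_pos) (auto intro: add_nonneg_pos)
  then obtain p where p: "real_polynomial_function p"
    and p_approx: "\<And>x. x \<in> cball 0 \<rho> \<Longrightarrow> \<bar>q x - p x\<bar> < e / (\<rho>^4 + 1)"
    using Stone_Weierstrass_real_polynomial_function[OF compact_cball continuous_on_subset[OF q_cont]]
    by blast
  obtain Dp where Dp: "\<And>x. (p has_derivative Dp x) (at x)" "\<And>v. continuous_on UNIV (\<lambda>x. Dp x v)"
    using real_polynomial_function_has_continuous_derivative[OF p] by blast
  have p_cont: "continuous_on UNIV p"
    using p continuous_real_polymonial_function continuous_at_imp_continuous_on by blast
  show ?thesis
  proof (rule that[of "\<lambda>x. bump x * p x"
        "\<lambda>x h. bump x * Dp x h + (- (h \<bullet> x + x \<bullet> h)) * (2 * max 0 (\<rho>\<^sup>2 - x \<bullet> x)) * p x"])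
    have "((\<lambda>x. bump x * p x) has_derivative
        (\<lambda>h. bump x * Dp x h + (- (h \<bullet> x + x \<bullet> h)) * (2 * max 0 (\<rho>\<^sup>2 - x \<bullet> x)) * p x)) (at x)" for x
      by (rule derivative_eq_intros bump_has_derivative Dp refl | simp add: algebra_simps)+
    moreover have "continuous_on UNIV
        (\<lambda>x. bump x * Dp x h + (- (h \<bullet> x + x \<bullet> h)) * (2 * max 0 (\<rho>\<^sup>2 - x \<bullet> x)) * p x)" for h
      by (intro continuous_intros bump_cont Dp p_cont)
    moreover have "bounded {x. bump x * p x \<noteq> 0}"
      by (rule bounded_subset[OF bounded_cball[of 0 \<rho>]]) (auto, metis bump_zero nle_le)
    ultimately show "C1c_test (\<lambda>x. bump x * p x)
        (\<lambda>x h. bump x * Dp x h + (- (h \<bullet> x + x \<bullet> h)) * (2 * max 0 (\<rho>\<^sup>2 - x \<bullet> x)) * p x)"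
      unfolding C1c_test_def by blast
    show "\<bar>bump x * p x - c x\<bar> \<le> e" for x
    proof (cases "norm x < \<rho>")
      case True
      have "c x = bump x * q x" using bump_pos[OF True] by (simp add: q_def)
      then have "\<bar>bump x * p x - c x\<bar> = bump x * \<bar>p x - q x\<bar>"
        using bump_pos[OF True] by (simp add: abs_mult right_diff_distrib[symmetric])
      also have "\<dots> \<le> \<rho>^4 * (e / (\<rho>^4 + 1))"
        using p_approx[of x] True bump_le[of x] bump_pos[OF True]
        by (intro mult_mono) (auto simp: abs_minus_commute)
      also have "\<dots> \<le> e"
        using \<open>e > 0\<close> by (simp add: divide_le_eq add_nonneg_pos)
      finally show ?thesis .
    qed (use bump_zero c_support \<rho> \<open>e > 0\<close> in auto)
    show "norm x \<ge> r + 1 \<Longrightarrow> bump x * p x = 0" for x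
      using bump_zero by (simp add: \<rho>_def)
  qed
qed

lemma bounded_measurable_ae_limit_of_C1c:
  fixes w :: "'a::euclidean_space \<Rightarrow> real"
  assumes "w \<in> borel_measurable lborel" and "\<And>x. \<bar>w x\<bar> \<le> B"
    and "\<And>x. norm x > r \<Longrightarrow> w x = 0" and "r \<ge> 0"
  obtains \<phi> D\<phi> where "\<And>k. C1c_test (\<phi> k) (D\<phi> k)" "\<And>k x. \<bar>\<phi> k x\<bar> \<le> B + 1"
    "\<And>k x. norm x \<ge> r + 2 \<Longrightarrow> \<phi> k x = 0" "AE x in lborel. (\<lambda>k. \<phi> k x) \<longlonglongrightarrow> w x"
proof -
  obtain c where c: "\<And>n. continuous_on UNIV (c n)" "\<And>n x. \<bar>c n x\<bar> \<le> B"
    and c_support: "\<And>n x. norm x \<ge> r + 1 \<Longrightarrow> c n x = 0"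
    and c_lim: "AE x in lborel. (\<lambda>n. c n x) \<longlonglongrightarrow> w x"
    using bounded_measurable_ae_limit_of_continuous[OF assms(1-3)] by blast
  have "\<forall>n. \<exists>\<phi> D\<phi>. C1c_test \<phi> D\<phi> \<and> (\<forall>x. \<bar>\<phi> x - c n x\<bar> \<le> 1 / (real n + 1))
      \<and> (\<forall>x. norm x \<ge> r + 2 \<longrightarrow> \<phi> x = 0)"
  proof
    fix n
    obtain \<phi> D\<phi> where "C1c_test \<phi> D\<phi>" "\<And>x. \<bar>\<phi> x - c n x\<bar> \<le> 1 / (real n + 1)"
      "\<And>x. norm x \<ge> r + 1 + 1 \<Longrightarrow> \<phi> x = 0"
      using C1c_uniform_approximation[of "c n" "r + 1" "1 / (real n + 1)"] c(1) c_support \<open>r \<ge> 0\<close>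
      by auto
    then show "\<exists>\<phi> D\<phi>. C1c_test \<phi> D\<phi> \<and> (\<forall>x. \<bar>\<phi> x - c n x\<bar> \<le> 1 / (real n + 1))
      \<and> (\<forall>x. norm x \<ge> r + 2 \<longrightarrow> \<phi> x = 0)" by auto
  qed
  then obtain \<phi> D\<phi> where \<phi>: "\<And>n. C1c_test (\<phi> n) (D\<phi> n)"
    and \<phi>_close: "\<And>n x. \<bar>\<phi> n x - c n x\<bar> \<le> 1 / (real n + 1)"
    and \<phi>_support: "\<And>n x. norm x \<ge> r + 2 \<Longrightarrow> \<phi> n x = 0"
    by metis
  show ?thesis
  proof (rule that[OF \<phi> _ \<phi>_support])
    show "\<bar>\<phi> k x\<bar> \<le> B + 1" for k x
    proof -
      have "1 / (real k + 1) \<le> 1" by (simp add: field_simps)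
      then show ?thesis using \<phi>_close[of k x] c(2)[of k x] by linarith
    qed
    from c_lim show "AE x in lborel. (\<lambda>k. \<phi> k x) \<longlonglongrightarrow> w x"
    proof eventually_elim
      case (elim x)
      have "(\<lambda>n. \<phi> n x - c n x) \<longlonglongrightarrow> 0"
      proof (rule Lim_null_comparison)
        show "\<forall>\<^sub>F n in sequentially. norm (\<phi> n x - c n x) \<le> 1 / (real n + 1)"
          using \<phi>_close by simp
        show "(\<lambda>n. 1 / (real n + 1)) \<longlonglongrightarrow> 0"
          using LIMSEQ_inverse_real_of_nat by (simp add: inverse_eq_divide add.commute)
      qed
      from tendsto_add[OF elim this] show ?case by simp
    qed
  qed
qed

lemma C1c_test_continuous: "C1c_test \<phi> D\<phi> \<Longrightarrow> continuous_on UNIV \<phi>"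
  unfolding C1c_test_def by (metis has_derivative_continuous continuous_at_imp_continuous_on)

lemma integrable_mult_bounded_compact_support:
  fixes v f :: "'a::euclidean_space \<Rightarrow> real"
  assumes "v \<in> borel_measurable lborel" and v_sq: "integrable lborel (\<lambda>x. (v x)\<^sup>2)"
    and "f \<in> borel_measurable lborel" and f_bound: "\<And>x. \<bar>f x\<bar> \<le> C"
    and f_support: "\<And>x. norm x > R \<Longrightarrow> f x = 0"
  shows "integrable lborel (\<lambda>x. v x * f x)"
proof (rule Bochner_Integration.integrable_bound)
  show "integrable lborel (\<lambda>x. C * ((v x)\<^sup>2 + indicator (cball 0 R) x))"
    by (intro integrable_mult_right Bochner_Integration.integrable_add v_sq integrable_real_indicator
        emeasure_bounded_finite) auto
  show "(\<lambda>x. v x * f x) \<in> borel_measurable lborel" using assms(1,3) by measurable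
  have C: "C \<ge> 0" using f_bound[of 0] by linarith
  show "AE x in lborel. norm (v x * f x) \<le> norm (C * ((v x)\<^sup>2 + indicator (cball 0 R) x))"
  proof (rule AE_I2)
    fix x
    show "norm (v x * f x) \<le> norm (C * ((v x)\<^sup>2 + indicator (cball 0 R) x))"
    proof (cases "norm x > R")
      case False
      have "0 \<le> (\<bar>v x\<bar> - 1)\<^sup>2" by simp
      then have "\<bar>v x\<bar> \<le> (v x)\<^sup>2 + 1" by (simp add: power2_eq_square algebra_simps)
      then have "\<bar>v x\<bar> * \<bar>f x\<bar> \<le> ((v x)\<^sup>2 + 1) * C" using f_bound[of x] by (intro mult_mono) auto
      then show ?thesis using False C by (simp add: abs_mult mult.commute)
    qed (simp add: f_support)
  qed
qed

lemma test_pairing_bound_extends: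
  fixes v w :: "'a::euclidean_space \<Rightarrow> real"
  assumes v: "v \<in> borel_measurable lborel" "integrable lborel (\<lambda>x. (v x)\<^sup>2)"
    and H: "\<And>\<phi> D\<phi>. C1c_test \<phi> D\<phi> \<Longrightarrow> (\<integral>x. v x * \<phi> x \<partial>lborel) \<le> M * sqrt (\<integral>x. (\<phi> x)\<^sup>2 \<partial>lborel)"
    and w: "w \<in> borel_measurable lborel" "\<And>x. \<bar>w x\<bar> \<le> B" "\<And>x. norm x > r \<Longrightarrow> w x = 0"
    and "r \<ge> 0"
  shows "(\<integral>x. v x * w x \<partial>lborel) \<le> M * sqrt (\<integral>x. (w x)\<^sup>2 \<partial>lborel)"
proof -
  note [measurable] = v(1) w(1)
  obtain \<phi> D\<phi> where \<phi>: "\<And>k. C1c_test (\<phi> k) (D\<phi> k)" and \<phi>_bound: "\<And>k x. \<bar>\<phi> k x\<bar> \<le> B + 1"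
    and \<phi>_support: "\<And>k x. norm x \<ge> r + 2 \<Longrightarrow> \<phi> k x = 0"
    and \<phi>_lim: "AE x in lborel. (\<lambda>k. \<phi> k x) \<longlonglongrightarrow> w x"
    using bounded_measurable_ae_limit_of_C1c[OF w \<open>r \<ge> 0\<close>] by blast
  have [measurable]: "\<phi> k \<in> borel_measurable lborel" for k
    using borel_measurable_continuous_onI[OF C1c_test_continuous[OF \<phi>]] by simp
  define K where "K = cball (0::'a) (r + 2)"
  have [measurable]: "K \<in> sets lborel" unfolding K_def by simp
  have K_finite: "emeasure lborel K < \<infinity>" unfolding K_def by (rule emeasure_bounded_finite) simp
  have "B \<ge> 0" using w(2)[of 0] by linarith
  have \<phi>_dom: "\<bar>\<phi> k x\<bar> \<le> (B + 1) * indicator K x" for k x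
    using \<phi>_bound[of k x] \<phi>_support[of x k] by (auto simp: K_def indicator_def)
  have "(\<lambda>k. \<integral>x. v x * \<phi> k x \<partial>lborel) \<longlonglongrightarrow> (\<integral>x. v x * w x \<partial>lborel)"
  proof (rule integral_dominated_convergence[where w="\<lambda>x. \<bar>v x * ((B + 1) * indicator K x)\<bar>"])
    show "integrable lborel (\<lambda>x. \<bar>v x * ((B + 1) * indicator K x)\<bar>)"
      by (intro integrable_abs integrable_mult_bounded_compact_support[OF v, where C="B + 1" and R="r + 2"])
         (use \<open>B \<ge> 0\<close> in \<open>auto simp: K_def indicator_def\<close>)
    show "AE x in lborel. (\<lambda>k. v x * \<phi> k x) \<longlonglongrightarrow> v x * w x"
      using \<phi>_lim by eventually_elim (intro tendsto_intros)
    show "AE x in lborel. norm (v x * \<phi> k x) \<le> \<bar>v x * ((B + 1) * indicator K x)\<bar>" for k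
    proof (rule AE_I2)
      fix x
      have "\<bar>v x\<bar> * \<bar>\<phi> k x\<bar> \<le> \<bar>v x\<bar> * ((B + 1) * indicator K x)"
        using \<phi>_dom[of k x] by (rule mult_left_mono) simp
      then show "norm (v x * \<phi> k x) \<le> \<bar>v x * ((B + 1) * indicator K x)\<bar>"
        using \<open>B \<ge> 0\<close> by (simp add: abs_mult)
    qed
  qed measurable
  moreover have "(\<lambda>k. \<integral>x. (\<phi> k x)\<^sup>2 \<partial>lborel) \<longlonglongrightarrow> (\<integral>x. (w x)\<^sup>2 \<partial>lborel)"
  proof (rule integral_dominated_convergence[where w="\<lambda>x. (B + 1)\<^sup>2 * indicator K x"])
    show "integrable lborel (\<lambda>x. (B + 1)\<^sup>2 * indicator K x)"
      by (intro integrable_mult_right integrable_real_indicator K_finite) (simp add: K_def)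
    show "AE x in lborel. (\<lambda>k. (\<phi> k x)\<^sup>2) \<longlonglongrightarrow> (w x)\<^sup>2"
      using \<phi>_lim by eventually_elim (intro tendsto_intros)
    show "AE x in lborel. norm ((\<phi> k x)\<^sup>2) \<le> (B + 1)\<^sup>2 * indicator K x" for k
    proof (rule AE_I2)
      fix x
      have "\<bar>\<phi> k x\<bar>\<^sup>2 \<le> ((B + 1) * indicator K x)\<^sup>2" using \<phi>_dom[of k x] by (intro power_mono) auto
      then show "norm ((\<phi> k x)\<^sup>2) \<le> (B + 1)\<^sup>2 * indicator K x"
        by (auto simp: power_mult_distrib indicator_def)
    qed
  qed measurable
  ultimately show ?thesis
    by (rule LIMSEQ_le[OF _ tendsto_mult_left[OF tendsto_real_sqrt]]) (use H \<phi> in blast)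
qed

lemma L2_norm_le_by_test_duality:
  fixes v :: "'a::euclidean_space \<Rightarrow> real"
  assumes v: "v \<in> borel_measurable lborel" "integrable lborel (\<lambda>x. (v x)\<^sup>2)" and "M \<ge> 0"
    and H: "\<And>\<phi> D\<phi>. C1c_test \<phi> D\<phi> \<Longrightarrow> (\<integral>x. v x * \<phi> x \<partial>lborel) \<le> M * sqrt (\<integral>x. (\<phi> x)\<^sup>2 \<partial>lborel)"
  shows "(\<integral>x. (v x)\<^sup>2 \<partial>lborel) \<le> M\<^sup>2"
proof -
  note [measurable] = v(1)
  define w where "w n x = (if \<bar>v x\<bar> \<le> real n \<and> norm x \<le> real n then v x else 0)" for n x
  have [measurable]: "w n \<in> borel_measurable lborel" for n unfolding w_def by measurable
  have truncation_le: "(\<integral>x. (w n x)\<^sup>2 \<partial>lborel) \<le> M\<^sup>2" for n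
  proof -
    define S where "S = (\<integral>x. (w n x)\<^sup>2 \<partial>lborel)"
    have "(\<integral>x. v x * w n x \<partial>lborel) \<le> M * sqrt S"
      unfolding S_def by (rule test_pairing_bound_extends[OF v H, where r="real n"]) (auto simp: w_def)
    moreover have "v x * w n x = (w n x)\<^sup>2" for x by (simp add: w_def power2_eq_square)
    ultimately have le: "sqrt S * sqrt S \<le> M * sqrt S" by (simp add: S_def)
    have "S \<ge> 0" unfolding S_def by simp
    have "sqrt S \<le> M"
    proof (cases "S = 0")
      case False
      then show ?thesis using \<open>S \<ge> 0\<close> by (intro mult_right_le_imp_le[OF le]) simp
    qed (use \<open>M \<ge> 0\<close> in simp)
    then have "(sqrt S)\<^sup>2 \<le> M\<^sup>2" using \<open>S \<ge> 0\<close> by (intro power_mono) auto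
    then show ?thesis using \<open>S \<ge> 0\<close> by (simp add: S_def)
  qed
  have "(\<lambda>n. \<integral>x. (w n x)\<^sup>2 \<partial>lborel) \<longlonglongrightarrow> (\<integral>x. (v x)\<^sup>2 \<partial>lborel)"
  proof (rule integral_dominated_convergence[where w="\<lambda>x. (v x)\<^sup>2"])
    show "AE x in lborel. (\<lambda>n. (w n x)\<^sup>2) \<longlonglongrightarrow> (v x)\<^sup>2"
    proof (rule AE_I2)
      fix x
      obtain N where N: "real N \<ge> max \<bar>v x\<bar> (norm x)" using real_arch_simple by blast
      have "eventually (\<lambda>n. (w n x)\<^sup>2 = (v x)\<^sup>2) sequentially"
        using eventually_ge_at_top[of N] by eventually_elim (use N in \<open>auto simp: w_def\<close>)
      then show "(\<lambda>n. (w n x)\<^sup>2) \<longlonglongrightarrow> (v x)\<^sup>2" by (rule tendsto_eventually)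
    qed
    show "AE x in lborel. norm ((w n x)\<^sup>2) \<le> (v x)\<^sup>2" for n
      by (rule AE_I2) (auto simp: w_def)
  qed (use v in measurable)
  then show ?thesis using truncation_le by (intro LIMSEQ_le_const2) auto
qed

section \<open>Difference quotients of Sobolev functions\<close>

lemma lborel_integral_translate:
  fixes f :: "'a::euclidean_space \<Rightarrow> 'b::{banach,second_countable_topology}"
  assumes [measurable]: "f \<in> borel_measurable borel"
  shows "(\<integral>x. f (x + h) \<partial>lborel) = (\<integral>x. f x \<partial>lborel)"
proof -
  have "(\<integral>x. f x \<partial>lborel) = (\<integral>x. f x \<partial>distr lborel borel ((+) h))"
    by (simp add: lborel_distr_plus)
  also have "\<dots> = (\<integral>x. f (h + x) \<partial>lborel)" by (rule integral_distr) auto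
  finally show ?thesis by (simp add: add.commute)
qed

lemma lborel_integrable_translate_iff:
  fixes f :: "'a::euclidean_space \<Rightarrow> 'b::{banach,second_countable_topology}"
  assumes [measurable]: "f \<in> borel_measurable borel"
  shows "integrable lborel (\<lambda>x. f (x + h)) \<longleftrightarrow> integrable lborel f"
proof -
  have "integrable lborel f \<longleftrightarrow> integrable (distr lborel borel ((+) h)) f"
    by (simp add: lborel_distr_plus)
  also have "\<dots> \<longleftrightarrow> integrable lborel (\<lambda>x. f (h + x))" by (rule integrable_distr_eq) auto
  finally show ?thesis by (simp add: add.commute)
qed

lemma integrable_mult_of_square_integrable:
  fixes f g :: "'b \<Rightarrow> real"
  assumes "f \<in> borel_measurable M" "g \<in> borel_measurable M"
    and "integrable M (\<lambda>x. (f x)\<^sup>2)" "integrable M (\<lambda>x. (g x)\<^sup>2)"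
  shows "integrable M (\<lambda>x. f x * g x)"
proof (rule Bochner_Integration.integrable_bound[where f="\<lambda>x. (f x)\<^sup>2 + (g x)\<^sup>2"])
  show "AE x in M. norm (f x * g x) \<le> norm ((f x)\<^sup>2 + (g x)\<^sup>2)"
  proof (rule AE_I2)
    fix x
    have "0 \<le> (\<bar>f x\<bar> - \<bar>g x\<bar>)\<^sup>2" by simp
    then have "2 * (\<bar>f x\<bar> * \<bar>g x\<bar>) \<le> (f x)\<^sup>2 + (g x)\<^sup>2" by (simp add: power2_eq_square algebra_simps)
    then show "norm (f x * g x) \<le> norm ((f x)\<^sup>2 + (g x)\<^sup>2)"
      by (simp add: abs_mult) (smt (verit) abs_ge_zero mult_nonneg_nonneg)
  qed
qed (use assms in auto)

lemma square_integrable_add_diff: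
  fixes f g :: "'b \<Rightarrow> real"
  assumes "f \<in> borel_measurable M" "g \<in> borel_measurable M"
    and "integrable M (\<lambda>x. (f x)\<^sup>2)" "integrable M (\<lambda>x. (g x)\<^sup>2)"
  shows "integrable M (\<lambda>x. (f x + g x)\<^sup>2)" "integrable M (\<lambda>x. (f x - g x)\<^sup>2)"
proof -
  have "integrable M (\<lambda>x. 2 * (f x * g x))"
    using integrable_mult_of_square_integrable[OF assms] by (rule integrable_mult_right)
  then show "integrable M (\<lambda>x. (f x + g x)\<^sup>2)" "integrable M (\<lambda>x. (f x - g x)\<^sup>2)"
    using assms(3,4) by (simp_all add: power2_sum power2_diff mult.assoc)
qed

lemma integral_abs_mult_le_sqrt:
  fixes f g :: "'b \<Rightarrow> real"
  assumes [measurable]: "f \<in> borel_measurable M" "g \<in> borel_measurable M"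
    and "integrable M (\<lambda>x. (f x)\<^sup>2)" "integrable M (\<lambda>x. (g x)\<^sup>2)"
  shows "(\<integral>x. \<bar>f x * g x\<bar> \<partial>M) \<le> sqrt (\<integral>x. (f x)\<^sup>2 \<partial>M) * sqrt (\<integral>x. (g x)\<^sup>2 \<partial>M)"
proof -
  have "integrable M (\<lambda>x. \<bar>f x * g x\<bar>)"
    using integrable_mult_of_square_integrable[OF assms] by (rule integrable_abs)
  then have "(\<integral>\<^sup>+x. ennreal \<bar>f x * g x\<bar> \<partial>M) = ennreal (\<integral>x. \<bar>f x * g x\<bar> \<partial>M)"
    by (rule nn_integral_eq_integral) simp
  then have "ennreal (\<integral>x. \<bar>f x * g x\<bar> \<partial>M) = (\<integral>\<^sup>+x. ennreal \<bar>f x\<bar> * ennreal \<bar>g x\<bar> \<partial>M)"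
    by (simp add: abs_mult ennreal_mult)
  moreover have "(\<integral>\<^sup>+x. ennreal \<bar>f x\<bar> ^ 2 \<partial>M) = ennreal (\<integral>x. (f x)\<^sup>2 \<partial>M)"
    "(\<integral>\<^sup>+x. ennreal \<bar>g x\<bar> ^ 2 \<partial>M) = ennreal (\<integral>x. (g x)\<^sup>2 \<partial>M)"
    using assms(3,4) by (auto simp: ennreal_power nn_integral_eq_integral)
  ultimately have "ennreal (\<integral>x. \<bar>f x * g x\<bar> \<partial>M) ^ 2
      \<le> ennreal (\<integral>x. (f x)\<^sup>2 \<partial>M) * ennreal (\<integral>x. (g x)\<^sup>2 \<partial>M)"
    using Cauchy_Schwarz_nn_integral[of "\<lambda>x. ennreal \<bar>f x\<bar>" M "\<lambda>x. ennreal \<bar>g x\<bar>"] by simp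
  then have "(\<integral>x. \<bar>f x * g x\<bar> \<partial>M)\<^sup>2 \<le> (\<integral>x. (f x)\<^sup>2 \<partial>M) * (\<integral>x. (g x)\<^sup>2 \<partial>M)"
    by (simp add: ennreal_power ennreal_mult[symmetric])
  then show ?thesis by (simp add: real_le_rsqrt real_sqrt_mult[symmetric])
qed

lemma C1c_test_support:
  fixes \<phi> :: "'a::euclidean_space \<Rightarrow> real"
  assumes "C1c_test \<phi> D\<phi>"
  shows "\<exists>R. \<forall>x. norm x > R \<longrightarrow> \<phi> x = 0 \<and> (\<forall>h. D\<phi> x h = 0)"
proof -
  from assms have deriv: "\<And>x. (\<phi> has_derivative D\<phi> x) (at x)" and "bounded {x. \<phi> x \<noteq> 0}"
    unfolding C1c_test_def by auto
  then obtain R where R: "\<forall>x\<in>{x. \<phi> x \<noteq> 0}. norm x \<le> R" unfolding bounded_iff by blast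
  have zero: "\<phi> x = 0" if "norm x > R" for x using R that by force
  have "D\<phi> x h = 0" if x: "norm x > R" for x h
  proof -
    have U: "open {y :: 'a. R < norm y}" by (intro open_Collect_less continuous_intros)
    have "(\<phi> has_derivative (\<lambda>h. 0)) (at x)"
      by (rule has_derivative_transform_within_open[OF _ U, of "\<lambda>y. 0"]) (use x zero in auto)
    then show ?thesis using has_derivative_unique[OF deriv] by metis
  qed
  with zero show ?thesis by blast
qed

lemma continuous_compact_support_bounded:
  fixes f :: "'a::euclidean_space \<Rightarrow> real"
  assumes "continuous_on UNIV f" and "\<And>x. norm x > R \<Longrightarrow> f x = 0"
  obtains C where "\<And>x. \<bar>f x\<bar> \<le> C"
proof -
  obtain C where "C \<ge> 0" and C: "\<And>x. x \<in> cball 0 R \<Longrightarrow> norm (f x) \<le> C"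
    using continuous_on_compact_bound[OF compact_cball continuous_on_subset[OF assms(1) subset_UNIV]]
    by blast
  show ?thesis
  proof (rule that)
    show "\<bar>f x\<bar> \<le> C" for x
      using C[of x] assms(2)[of x] \<open>C \<ge> 0\<close> by (cases "norm x > R") auto
  qed
qed

lemma C1c_test_bounded:
  fixes \<phi> :: "'a::euclidean_space \<Rightarrow> real"
  assumes "C1c_test \<phi> D\<phi>"
  obtains C where "\<And>x. \<bar>\<phi> x\<bar> \<le> C"
proof -
  obtain R where "\<forall>x. norm x > R \<longrightarrow> \<phi> x = 0 \<and> (\<forall>h. D\<phi> x h = 0)"
    using C1c_test_support[OF assms] by blast
  then show ?thesis
    using continuous_compact_support_bounded[OF C1c_test_continuous[OF assms], of R] that by blast
qed

lemma C1c_test_derivative_bounded: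
  fixes \<phi> :: "'a::euclidean_space \<Rightarrow> real"
  assumes "C1c_test \<phi> D\<phi>" "b \<in> Basis"
  obtains C where "\<And>x. \<bar>D\<phi> x b\<bar> \<le> C"
proof -
  obtain R where "\<forall>x. norm x > R \<longrightarrow> \<phi> x = 0 \<and> (\<forall>h. D\<phi> x h = 0)"
    using C1c_test_support[OF assms(1)] by blast
  moreover have "continuous_on UNIV (\<lambda>x. D\<phi> x b)" using assms unfolding C1c_test_def by auto
  ultimately show ?thesis
    using continuous_compact_support_bounded[of "\<lambda>x. D\<phi> x b" R] that by blast
qed

lemma C1c_test_translate:
  assumes "C1c_test \<phi> D\<phi>"
  shows "C1c_test (\<lambda>y. \<phi> (y - c)) (\<lambda>y. D\<phi> (y - c))"
proof -
  from assms have deriv: "\<And>x. (\<phi> has_derivative D\<phi> x) (at x)"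
    and cont: "\<And>b. b \<in> Basis \<Longrightarrow> continuous_on UNIV (\<lambda>x. D\<phi> x b)"
    and supp: "bounded {x. \<phi> x \<noteq> 0}"
    unfolding C1c_test_def by auto
  have "((\<lambda>y. \<phi> (y - c)) has_derivative D\<phi> (x - c)) (at x)" for x
  proof -
    have "((\<lambda>y. y - c) has_derivative (\<lambda>h. h)) (at x)" by (auto intro!: derivative_eq_intros)
    then have "((\<lambda>y. \<phi> (y - c)) has_derivative D\<phi> (x - c)) (at x within UNIV)"
      by (rule has_derivative_in_compose2[where t=UNIV and g'=D\<phi>, rotated 3]) (auto intro: deriv)
    then show ?thesis by simp
  qed
  moreover have "continuous_on UNIV (\<lambda>x. D\<phi> (x - c) b)" if "b \<in> Basis" for b
    by (rule continuous_on_compose2[OF cont[OF that]]) (auto intro: continuous_intros)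
  moreover obtain B where "\<And>x. \<phi> x \<noteq> 0 \<Longrightarrow> norm x \<le> B" using supp unfolding bounded_iff by blast
  then have "{y. \<phi> (y - c) \<noteq> 0} \<subseteq> cball 0 (B + norm c)"
  proof (intro subsetI)
    fix y assume "y \<in> {y. \<phi> (y - c) \<noteq> 0}"
    then have "norm (y - c) \<le> B" using \<open>\<And>x. \<phi> x \<noteq> 0 \<Longrightarrow> norm x \<le> B\<close> by simp
    then show "y \<in> cball 0 (B + norm c)" using norm_triangle_sub[of y c] by simp
  qed
  then have "bounded {y. \<phi> (y - c) \<noteq> 0}" by (rule bounded_subset[OF bounded_cball])
  ultimately show ?thesis unfolding C1c_test_def by blast
qed

lemma C1c_test_square_integrable:
  fixes \<phi> :: "'a::euclidean_space \<Rightarrow> real"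
  assumes "C1c_test \<phi> D\<phi>"
  shows "integrable lborel (\<lambda>x. (\<phi> x)\<^sup>2)"
proof -
  obtain R where "\<forall>x. norm x > R \<longrightarrow> \<phi> x = 0 \<and> (\<forall>h. D\<phi> x h = 0)"
    using C1c_test_support[OF assms] by blast
  then have R: "\<And>x. norm x > R \<Longrightarrow> \<phi> x = 0" by blast
  obtain C where C: "\<And>x. \<bar>\<phi> x\<bar> \<le> C" using C1c_test_bounded[OF assms] by blast
  have [measurable]: "\<phi> \<in> borel_measurable borel"
    using borel_measurable_continuous_onI[OF C1c_test_continuous[OF assms]] .
  have "emeasure lborel (cball (0::'a) R) < \<infinity>" by (rule emeasure_bounded_finite) simp
  then have dom: "integrable lborel (\<lambda>x. C\<^sup>2 * indicator (cball (0::'a) R) x)"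
    by (intro integrable_mult_right integrable_real_indicator) simp_all
  have bound: "norm ((\<phi> x)\<^sup>2) \<le> norm (C\<^sup>2 * indicator (cball 0 R) x)" for x
  proof (cases "x \<in> cball 0 R")
    case True
    have "\<bar>\<phi> x\<bar>\<^sup>2 \<le> C\<^sup>2" using C[of x] by (intro power_mono) auto
    then show ?thesis using True by simp
  qed (use R[of x] in simp)
  show ?thesis
    by (rule Bochner_Integration.integrable_bound[OF dom _ AE_I2[OF bound]]) simp
qed

lemma integrable_mult_C1c_test:
  fixes u \<phi> :: "'a::euclidean_space \<Rightarrow> real"
  assumes "u \<in> borel_measurable lborel" "integrable lborel (\<lambda>x. (u x)\<^sup>2)" and "C1c_test \<phi> D\<phi>"
  shows "integrable lborel (\<lambda>x. u x * \<phi> x)"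
proof -
  have "\<phi> \<in> borel_measurable lborel"
    using borel_measurable_continuous_onI[OF C1c_test_continuous[OF assms(3)]] by simp
  moreover obtain C where "\<And>x. \<bar>\<phi> x\<bar> \<le> C" using C1c_test_bounded[OF assms(3)] by blast
  moreover obtain R where "\<forall>x. norm x > R \<longrightarrow> \<phi> x = 0 \<and> (\<forall>h. D\<phi> x h = 0)"
    using C1c_test_support[OF assms(3)] by blast
  then have "\<And>x. norm x > R \<Longrightarrow> \<phi> x = 0" by blast
  ultimately show ?thesis by (rule integrable_mult_bounded_compact_support[OF assms(1,2)])
qed

lemma C1c_test_segment_integral:
  assumes "C1c_test \<phi> D\<phi>" and "b \<in> Basis"
  shows "(\<integral>s. indicator {0..1} s * (- t * D\<phi> (y - s *\<^sub>R (t *\<^sub>R b)) b) \<partial>lborel)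
         = \<phi> (y - t *\<^sub>R b) - \<phi> y"
proof -
  from assms have deriv: "\<And>x. (\<phi> has_derivative D\<phi> x) (at x)"
    and cont: "continuous_on UNIV (\<lambda>x. D\<phi> x b)"
    unfolding C1c_test_def by auto
  have "(\<integral>s. indicator {0..1} s *\<^sub>R (- t * D\<phi> (y - s *\<^sub>R (t *\<^sub>R b)) b) \<partial>lborel)
         = \<phi> (y - 1 *\<^sub>R (t *\<^sub>R b)) - \<phi> (y - 0 *\<^sub>R (t *\<^sub>R b))"
  proof (rule integral_FTC_atLeastAtMost)
    fix s :: real
    have "((\<lambda>s. y - s *\<^sub>R (t *\<^sub>R b)) has_derivative (\<lambda>ds. - (ds *\<^sub>R (t *\<^sub>R b)))) (at s)"
      by (auto intro!: derivative_eq_intros)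
    then have "((\<lambda>s. \<phi> (y - s *\<^sub>R (t *\<^sub>R b)))
        has_derivative (\<lambda>ds. D\<phi> (y - s *\<^sub>R (t *\<^sub>R b)) (- (ds *\<^sub>R (t *\<^sub>R b))))) (at s within UNIV)"
      by (rule has_derivative_in_compose2[where t=UNIV and g'=D\<phi>, rotated 3]) (auto intro: deriv)
    moreover have "linear (D\<phi> (y - s *\<^sub>R (t *\<^sub>R b)))"
      by (rule bounded_linear.linear[OF has_derivative_bounded_linear[OF deriv]])
    ultimately have "((\<lambda>s. \<phi> (y - s *\<^sub>R (t *\<^sub>R b)))
        has_vector_derivative (- t * D\<phi> (y - s *\<^sub>R (t *\<^sub>R b)) b)) (at s)"
      unfolding has_vector_derivative_def by (simp add: linear_neg linear_scale mult.assoc)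
    then show "((\<lambda>s. \<phi> (y - s *\<^sub>R (t *\<^sub>R b)))
        has_vector_derivative (- t * D\<phi> (y - s *\<^sub>R (t *\<^sub>R b)) b)) (at s within {0..1})"
      by (rule has_vector_derivative_at_within)
  next
    show "continuous_on {0..1} (\<lambda>s. - t * D\<phi> (y - s *\<^sub>R (t *\<^sub>R b)) b)"
      by (intro continuous_intros continuous_on_compose2[OF cont]) auto
  qed simp
  then show ?thesis by simp
qed

lemma integrable_pair_mult_bounded_compact_support:
  fixes u :: "'a::euclidean_space \<Rightarrow> real" and \<psi> :: "'a \<Rightarrow> real \<Rightarrow> real"
  assumes u: "u \<in> borel_measurable lborel" "integrable lborel (\<lambda>y. (u y)\<^sup>2)"
    and \<psi>_meas: "(\<lambda>(y, s). \<psi> y s) \<in> borel_measurable (lborel \<Otimes>\<^sub>M lborel)"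
    and \<psi>_bound: "\<And>y s. \<bar>\<psi> y s\<bar> \<le> C * indicator (cball 0 R) y * indicator {0..1} s" and C: "C \<ge> 0"
  shows "integrable (lborel \<Otimes>\<^sub>M lborel) (\<lambda>(y, s). u y * \<psi> y s)"
proof (rule lborel_pair.Fubini_integrable)
  note [measurable] = u(1) \<psi>_meas
  define dom where "dom y = \<bar>u y\<bar> * (C * indicator (cball 0 R) y)" for y
  have "integrable lborel (\<lambda>y. u y * (C * indicator (cball 0 R) y))"
    by (rule integrable_mult_bounded_compact_support[OF u, where C=C and R=R])
       (use C in \<open>auto simp: indicator_def\<close>)
  then have "integrable lborel (\<lambda>y. \<bar>u y * (C * indicator (cball 0 R) y)\<bar>)"
    by (rule integrable_abs)
  moreover have "\<bar>u y * (C * indicator (cball 0 R) y)\<bar> = dom y" for y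
    using C by (simp add: dom_def abs_mult)
  ultimately have dom_int: "integrable lborel dom" by simp
  have s_bound: "\<bar>u y * \<psi> y s\<bar> \<le> dom y * indicator {0..1} s" for y s
    using mult_left_mono[OF \<psi>_bound[of y s], of "\<bar>u y\<bar>"] by (simp add: dom_def abs_mult mult_ac)
  have s_int: "integrable lborel (\<lambda>s. dom y * indicator {0..1::real} s)" for y
    by (intro integrable_mult_right integrable_real_indicator) auto
  show "(\<lambda>(y, s). u y * \<psi> y s) \<in> borel_measurable (lborel \<Otimes>\<^sub>M lborel)" by measurable
  show "AE y in lborel. integrable lborel (\<lambda>s. case (y, s) of (y, s) \<Rightarrow> u y * \<psi> y s)"
  proof (rule AE_I2)
    fix y
    have "dom y \<ge> 0" using C by (simp add: dom_def)
    then show "integrable lborel (\<lambda>s. case (y, s) of (y, s) \<Rightarrow> u y * \<psi> y s)"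
      using s_bound[of y] by (intro Bochner_Integration.integrable_bound[OF s_int[of y] _ AE_I2]) auto
  qed
  show "integrable lborel (\<lambda>y. \<integral>s. norm (case (y, s) of (y, s) \<Rightarrow> u y * \<psi> y s) \<partial>lborel)"
  proof (rule Bochner_Integration.integrable_bound[OF dom_int _ AE_I2])
    show "(\<lambda>y. \<integral>s. norm (case (y, s) of (y, s) \<Rightarrow> u y * \<psi> y s) \<partial>lborel) \<in> borel_measurable lborel"
      by (rule lborel.borel_measurable_lebesgue_integral) measurable
    fix y
    have "(\<integral>s. \<bar>u y * \<psi> y s\<bar> \<partial>lborel) \<le> (\<integral>s. dom y * indicator {0..1::real} s \<partial>lborel)"
      by (rule integral_mono'[OF s_int]) (use s_bound C in \<open>auto simp: dom_def\<close>)
    also have "\<dots> = dom y" by simp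
    finally show "norm (\<integral>s. norm (case (y, s) of (y, s) \<Rightarrow> u y * \<psi> y s) \<partial>lborel) \<le> norm (dom y)"
      by (simp add: dom_def)
  qed
qed

lemma translate_difference_pairing:
  fixes u :: "'a::euclidean_space \<Rightarrow> real"
  assumes u: "u \<in> borel_measurable lborel" "integrable lborel (\<lambda>x. (u x)\<^sup>2)" and \<phi>: "C1c_test \<phi> D\<phi>"
  shows "(\<integral>x. (u (x + h) - u x) * \<phi> x \<partial>lborel) = (\<integral>y. u y * (\<phi> (y - h) - \<phi> y) \<partial>lborel)"
proof -
  note [measurable] = u(1)
  have [measurable]: "\<phi> \<in> borel_measurable borel"
    using borel_measurable_continuous_onI[OF C1c_test_continuous[OF \<phi>]] .
  have "integrable lborel (\<lambda>x. (u (x + h))\<^sup>2)"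
    using u(2) by (subst lborel_integrable_translate_iff[where f="\<lambda>x. (u x)\<^sup>2"]) auto
  then have "integrable lborel (\<lambda>x. u (x + h) * \<phi> x)"
    by (rule integrable_mult_C1c_test[OF _ _ \<phi>, rotated]) measurable
  moreover have u\<phi>: "integrable lborel (\<lambda>x. u x * \<phi> x)" by (rule integrable_mult_C1c_test[OF u \<phi>])
  moreover have "integrable lborel (\<lambda>y. u y * \<phi> (y - h))"
    by (rule integrable_mult_C1c_test[OF u C1c_test_translate[OF \<phi>]])
  moreover have "(\<integral>x. u (x + h) * \<phi> x \<partial>lborel) = (\<integral>y. u y * \<phi> (y - h) \<partial>lborel)"
    using lborel_integral_translate[of "\<lambda>y. u y * \<phi> (y - h)" h] by simp
  ultimately show ?thesis by (simp add: left_diff_distrib right_diff_distrib)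
qed

lemma integrable_inner_Basis_square:
  fixes G :: "'a::euclidean_space \<Rightarrow> 'a"
  assumes [measurable]: "G \<in> borel_measurable borel" and "integrable lborel (\<lambda>x. (norm (G x))\<^sup>2)"
    and "b \<in> Basis"
  shows "integrable lborel (\<lambda>x. (G x \<bullet> b)\<^sup>2)"
proof (rule Bochner_Integration.integrable_bound[OF assms(2) _ AE_I2])
  fix x
  have "\<bar>G x \<bullet> b\<bar> \<le> norm (G x)" using Basis_le_norm[OF \<open>b \<in> Basis\<close>] by simp
  then have "\<bar>G x \<bullet> b\<bar>\<^sup>2 \<le> (norm (G x))\<^sup>2" by (intro power_mono) auto
  then show "norm ((G x \<bullet> b)\<^sup>2) \<le> norm ((norm (G x))\<^sup>2)" by simp
qed measurable

lemma W12_pairing_increment: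
  fixes u :: "'a::euclidean_space \<Rightarrow> real"
  assumes W: "W12_with_grad u G" and \<phi>: "C1c_test \<phi> D\<phi>" and b: "b \<in> Basis"
  shows "(\<integral>y. u y * (\<phi> (y - t *\<^sub>R b) - \<phi> y) \<partial>lborel)
       = (\<integral>s. indicator {0..1} s * t * (\<integral>y. (G y \<bullet> b) * \<phi> (y - s *\<^sub>R (t *\<^sub>R b)) \<partial>lborel) \<partial>lborel)"
proof -
  define h where "h = t *\<^sub>R b"
  from W have [measurable]: "u \<in> borel_measurable borel" and u_sq: "integrable lborel (\<lambda>x. (u x)\<^sup>2)"
    and weak: "weak_gradient u G"
    unfolding W12_with_grad_def by auto
  \<comment> \<open>\<phi> (y - h) - \<phi> y is the integral of \<psi> y over [0, 1]\<close>
  define \<psi> where "\<psi> y s = indicator {0..1::real} s * (- t * D\<phi> (y - s *\<^sub>R h) b)" for y s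
  obtain R where R: "\<forall>x. norm x > R \<longrightarrow> \<phi> x = 0 \<and> (\<forall>h. D\<phi> x h = 0)"
    using C1c_test_support[OF \<phi>] by blast
  obtain C where C: "\<And>x. \<bar>D\<phi> x b\<bar> \<le> C" using C1c_test_derivative_bounded[OF \<phi> b] by blast
  have "C \<ge> 0" using C[of 0] by linarith
  have \<psi>_bound: "\<bar>\<psi> y s\<bar> \<le> (\<bar>t\<bar> * C) * indicator (cball 0 (R + norm h)) y * indicator {0..1} s" for y s
  proof (cases "s \<in> {0..1}")
    case True
    show ?thesis
    proof (cases "norm y \<le> R + norm h")
      case False
      have "norm (s *\<^sub>R h) \<le> norm h" using True by (auto simp: mult_left_le_one_le)
      then have "norm (y - s *\<^sub>R h) > R" using False norm_triangle_ineq2[of y "s *\<^sub>R h"] by linarith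
      then show ?thesis using R \<open>C \<ge> 0\<close> by (simp add: \<psi>_def)
    qed (use True C[of "y - s *\<^sub>R h"] in \<open>simp add: \<psi>_def abs_mult mult_left_mono\<close>)
  qed (simp add: \<psi>_def)
  have "continuous_on UNIV (\<lambda>x. D\<phi> x b)" using \<phi> b unfolding C1c_test_def by blast
  then have "continuous_on UNIV (\<lambda>p::'a \<times> real. D\<phi> (fst p - snd p *\<^sub>R h) b)"
    by (intro continuous_on_compose2[OF \<open>continuous_on UNIV (\<lambda>x. D\<phi> x b)\<close>] continuous_intros) auto
  then have "(\<lambda>(y, s). D\<phi> (y - s *\<^sub>R h) b) \<in> borel_measurable (lborel \<Otimes>\<^sub>M lborel)"
    using borel_measurable_continuous_Pair[of fst "lborel \<Otimes>\<^sub>M lborel" snd "\<lambda>y s. D\<phi> (y - s *\<^sub>R h) b"]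
    by (simp add: case_prod_unfold)
  then have "(\<lambda>(y, s). \<psi> y s) \<in> borel_measurable (lborel \<Otimes>\<^sub>M lborel)"
    unfolding \<psi>_def case_prod_unfold by measurable
  then have "integrable (lborel \<Otimes>\<^sub>M lborel) (\<lambda>(y, s). u y * \<psi> y s)"
    using \<open>C \<ge> 0\<close> by (intro integrable_pair_mult_bounded_compact_support[OF _ u_sq _ \<psi>_bound]) simp_all
  then have Fubini: "(\<integral>s. \<integral>y. u y * \<psi> y s \<partial>lborel \<partial>lborel) = (\<integral>y. \<integral>s. u y * \<psi> y s \<partial>lborel \<partial>lborel)"
    by (rule lborel_pair.Fubini_integral)
  have inner_s: "(\<integral>s. u y * \<psi> y s \<partial>lborel) = u y * (\<phi> (y - h) - \<phi> y)" for y
  proof -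
    have "(\<integral>s. \<psi> y s \<partial>lborel) = \<phi> (y - h) - \<phi> y"
      unfolding \<psi>_def h_def by (rule C1c_test_segment_integral[OF \<phi> b])
    then show ?thesis by (simp only: integral_mult_right_zero)
  qed
  have inner_y: "(\<integral>y. u y * \<psi> y s \<partial>lborel)
      = indicator {0..1} s * t * (\<integral>y. (G y \<bullet> b) * \<phi> (y - s *\<^sub>R h) \<partial>lborel)" for s
  proof -
    have "(\<integral>y. u y * D\<phi> (y - s *\<^sub>R h) b \<partial>lborel) = - (\<integral>y. (G y \<bullet> b) * \<phi> (y - s *\<^sub>R h) \<partial>lborel)"
      using weak[unfolded weak_gradient_def, rule_format, OF C1c_test_translate[OF \<phi>] b] .
    moreover have "(\<integral>y. u y * \<psi> y s \<partial>lborel)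
        = (\<integral>y. (indicator {0..1} s * - t) * (u y * D\<phi> (y - s *\<^sub>R h) b) \<partial>lborel)"
      by (simp add: \<psi>_def mult_ac)
    ultimately show ?thesis by (simp only: integral_mult_right_zero)
  qed
  have "(\<integral>y. u y * (\<phi> (y - h) - \<phi> y) \<partial>lborel) = (\<integral>y. \<integral>s. u y * \<psi> y s \<partial>lborel \<partial>lborel)"
    by (simp only: inner_s)
  also have "\<dots> = (\<integral>s. \<integral>y. u y * \<psi> y s \<partial>lborel \<partial>lborel)" by (rule Fubini[symmetric])
  also have "\<dots> = (\<integral>s. indicator {0..1} s * t * (\<integral>y. (G y \<bullet> b) * \<phi> (y - s *\<^sub>R h) \<partial>lborel) \<partial>lborel)"
    by (simp only: inner_y)
  finally show ?thesis by (simp only: h_def)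
qed

lemma W12_translate_difference_pairing_le:
  fixes u :: "'a::euclidean_space \<Rightarrow> real"
  assumes W: "W12_with_grad u G" and b: "b \<in> Basis" and \<phi>: "C1c_test \<phi> D\<phi>"
  shows "(\<integral>x. (u (x + t *\<^sub>R b) - u x) * \<phi> x \<partial>lborel)
           \<le> \<bar>t\<bar> * sqrt (\<integral>x. (G x \<bullet> b)\<^sup>2 \<partial>lborel) * sqrt (\<integral>x. (\<phi> x)\<^sup>2 \<partial>lborel)"
proof -
  from W have [measurable]: "u \<in> borel_measurable borel" "G \<in> borel_measurable borel"
    and u_sq: "integrable lborel (\<lambda>x. (u x)\<^sup>2)" and G_sq: "integrable lborel (\<lambda>x. (norm (G x))\<^sup>2)"
    unfolding W12_with_grad_def by auto
  have [measurable]: "\<phi> \<in> borel_measurable borel"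
    using borel_measurable_continuous_onI[OF C1c_test_continuous[OF \<phi>]] .
  define K where "K = sqrt (\<integral>x. (G x \<bullet> b)\<^sup>2 \<partial>lborel) * sqrt (\<integral>x. (\<phi> x)\<^sup>2 \<partial>lborel)"
  have "K \<ge> 0" unfolding K_def by simp
  have A_bound: "\<bar>\<integral>y. (G y \<bullet> b) * \<phi> (y - c) \<partial>lborel\<bar> \<le> K" for c
  proof -
    have "integrable lborel (\<lambda>y. (\<phi> (y - c))\<^sup>2)"
      by (rule C1c_test_square_integrable[OF C1c_test_translate[OF \<phi>]])
    then have "(\<integral>y. \<bar>(G y \<bullet> b) * \<phi> (y - c)\<bar> \<partial>lborel)
        \<le> sqrt (\<integral>y. (G y \<bullet> b)\<^sup>2 \<partial>lborel) * sqrt (\<integral>y. (\<phi> (y - c))\<^sup>2 \<partial>lborel)"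
      by (intro integral_abs_mult_le_sqrt integrable_inner_Basis_square[OF _ G_sq b]) measurable
    also have "(\<integral>y. (\<phi> (y - c))\<^sup>2 \<partial>lborel) = (\<integral>y. (\<phi> y)\<^sup>2 \<partial>lborel)"
      using lborel_integral_translate[of "\<lambda>x. (\<phi> x)\<^sup>2" "- c"] by simp
    finally show ?thesis unfolding K_def by (rule order_trans[OF integral_abs_bound])
  qed
  have "(\<integral>x. (u (x + t *\<^sub>R b) - u x) * \<phi> x \<partial>lborel)
      = (\<integral>s. indicator {0..1} s * t * (\<integral>y. (G y \<bullet> b) * \<phi> (y - s *\<^sub>R (t *\<^sub>R b)) \<partial>lborel) \<partial>lborel)"
    using translate_difference_pairing[OF _ u_sq \<phi>] W12_pairing_increment[OF W \<phi> b] by simp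
  also have "\<dots> \<le> (\<integral>s. indicator {0..1::real} s * (\<bar>t\<bar> * K) \<partial>lborel)"
  proof -
    have "t * (\<integral>y. (G y \<bullet> b) * \<phi> (y - s *\<^sub>R (t *\<^sub>R b)) \<partial>lborel) \<le> \<bar>t\<bar> * K" for s
    proof -
      have "t * (\<integral>y. (G y \<bullet> b) * \<phi> (y - s *\<^sub>R (t *\<^sub>R b)) \<partial>lborel)
          \<le> \<bar>t * (\<integral>y. (G y \<bullet> b) * \<phi> (y - s *\<^sub>R (t *\<^sub>R b)) \<partial>lborel)\<bar>"
        by (rule abs_ge_self)
      also have "\<dots> = \<bar>t\<bar> * \<bar>\<integral>y. (G y \<bullet> b) * \<phi> (y - s *\<^sub>R (t *\<^sub>R b)) \<partial>lborel\<bar>"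
        by (rule abs_mult)
      also have "\<dots> \<le> \<bar>t\<bar> * K" by (rule mult_left_mono[OF A_bound]) simp
      finally show ?thesis .
    qed
    then have pointwise: "indicator {0..1} s * t * (\<integral>y. (G y \<bullet> b) * \<phi> (y - s *\<^sub>R (t *\<^sub>R b)) \<partial>lborel)
        \<le> indicator {0..1} s * (\<bar>t\<bar> * K)" for s :: real
      by (simp add: indicator_def)
    have "integrable lborel (\<lambda>s::real. indicator {0..1} s * (\<bar>t\<bar> * K))"
      by (intro integrable_mult_left integrable_real_indicator) simp_all
    then show ?thesis by (rule integral_mono') (use pointwise \<open>K \<ge> 0\<close> in auto)
  qed
  also have "\<dots> = \<bar>t\<bar> * K" by simp
  finally show ?thesis by (simp add: K_def mult_ac)
qed

lemma W12_translate_L2_bound: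
  fixes u :: "'a::euclidean_space \<Rightarrow> real"
  assumes W: "W12_with_grad u G" and b: "b \<in> Basis"
  shows "(\<integral>x. (u (x + t *\<^sub>R b) - u x)\<^sup>2 \<partial>lborel) \<le> t\<^sup>2 * (\<integral>x. (G x \<bullet> b)\<^sup>2 \<partial>lborel)"
proof -
  from W have [measurable]: "u \<in> borel_measurable borel" and u_sq: "integrable lborel (\<lambda>x. (u x)\<^sup>2)"
    unfolding W12_with_grad_def by auto
  have "integrable lborel (\<lambda>x. (u (x + t *\<^sub>R b))\<^sup>2)"
    using u_sq by (subst lborel_integrable_translate_iff[where f="\<lambda>x. (u x)\<^sup>2"]) auto
  then have "integrable lborel (\<lambda>x. (u (x + t *\<^sub>R b) - u x)\<^sup>2)"
    by (intro square_integrable_add_diff(2)[OF _ _ _ u_sq]) measurable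
  then have "(\<integral>x. (u (x + t *\<^sub>R b) - u x)\<^sup>2 \<partial>lborel) \<le> (\<bar>t\<bar> * sqrt (\<integral>x. (G x \<bullet> b)\<^sup>2 \<partial>lborel))\<^sup>2"
    using W12_translate_difference_pairing_le[OF W b]
    by (intro L2_norm_le_by_test_duality) (simp_all add: mult.assoc)
  then show ?thesis by (simp add: power_mult_distrib)
qed

section \<open>Decay of the Fourier transform of squares\<close>

lemma norm_fourier_square_le: "cmod (fourier (\<lambda>x. (u x)\<^sup>2) \<xi>) \<le> (\<integral>x. (u x)\<^sup>2 \<partial>lborel)"
proof -
  have "cmod (fourier (\<lambda>x. (u x)\<^sup>2) \<xi>) \<le> (\<integral>x. norm (cis (- (\<xi> \<bullet> x)) * complex_of_real ((u x)\<^sup>2)) \<partial>lborel)"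
    unfolding fourier_def by (rule integral_norm_bound)
  also have "\<dots> = (\<integral>x. (u x)\<^sup>2 \<partial>lborel)" by (simp add: norm_mult norm_power)
  finally show ?thesis .
qed

lemma fourier_translate:
  fixes f :: "'a::euclidean_space \<Rightarrow> real"
  assumes [measurable]: "f \<in> borel_measurable borel"
  shows "fourier (\<lambda>x. f (x + h)) \<xi> = cis (\<xi> \<bullet> h) * fourier f \<xi>"
proof -
  have "fourier f \<xi> = (\<integral>x. cis (- (\<xi> \<bullet> (x + h))) * complex_of_real (f (x + h)) \<partial>lborel)"
    unfolding fourier_def by (rule lborel_integral_translate[symmetric]) (unfold cis_conv_exp, measurable)
  also have "\<dots> = (\<integral>x. cis (- (\<xi> \<bullet> h)) * (cis (- (\<xi> \<bullet> x)) * complex_of_real (f (x + h))) \<partial>lborel)"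
    by (rule Bochner_Integration.integral_cong) (simp_all add: inner_add_right cis_mult algebra_simps)
  also have "\<dots> = cis (- (\<xi> \<bullet> h)) * fourier (\<lambda>x. f (x + h)) \<xi>"
    unfolding fourier_def by (rule integral_mult_right_zero)
  finally show ?thesis by (simp add: cis_mult mult.assoc[symmetric])
qed

lemma fourier_translate_diff_bound:
  fixes u :: "'a::euclidean_space \<Rightarrow> real"
  assumes W: "W12_with_grad u G" and b: "b \<in> Basis"
  shows "cmod ((cis (t * (\<xi> \<bullet> b)) - 1) * fourier (\<lambda>x. (u x)\<^sup>2) \<xi>)
          \<le> \<bar>t\<bar> * sqrt (\<integral>x. (G x \<bullet> b)\<^sup>2 \<partial>lborel) * (2 * sqrt (\<integral>x. (u x)\<^sup>2 \<partial>lborel))"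
proof -
  from W have [measurable]: "u \<in> borel_measurable borel" and u_sq: "integrable lborel (\<lambda>x. (u x)\<^sup>2)"
    unfolding W12_with_grad_def by auto
  define h where "h = t *\<^sub>R b"
  define e where "e x = cis (- (\<xi> \<bullet> x))" for x
  have [measurable]: "e \<in> borel_measurable borel" unfolding e_def cis_conv_exp by measurable
  have norm_e: "norm (e x) = 1" for x by (simp add: e_def)
  have u_sq_h: "integrable lborel (\<lambda>x. (u (x + h))\<^sup>2)"
    using u_sq by (subst lborel_integrable_translate_iff[where f="\<lambda>x. (u x)\<^sup>2"]) auto
  have int: "integrable lborel (\<lambda>x. e x * complex_of_real (f x))"
    if "f \<in> borel_measurable borel" "integrable lborel f" for f
    by (rule Bochner_Integration.integrable_bound[OF that(2) _ AE_I2]) (use that in \<open>simp_all add: norm_mult norm_e\<close>)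
  have "(cis (\<xi> \<bullet> h) - 1) * fourier (\<lambda>x. (u x)\<^sup>2) \<xi>
      = fourier (\<lambda>x. (u (x + h))\<^sup>2) \<xi> - fourier (\<lambda>x. (u x)\<^sup>2) \<xi>"
    using fourier_translate[of "\<lambda>x. (u x)\<^sup>2" h \<xi>] by (simp add: algebra_simps)
  also have "\<dots> = (\<integral>x. e x * complex_of_real ((u (x + h) - u x) * (u (x + h) + u x)) \<partial>lborel)"
    using int[OF _ u_sq_h] int[OF _ u_sq]
    by (simp add: left_diff_distrib fourier_def e_def[symmetric] algebra_simps power2_eq_square)
  also have "cmod \<dots> \<le> (\<integral>x. \<bar>(u (x + h) - u x) * (u (x + h) + u x)\<bar> \<partial>lborel)"
    by (rule order_trans[OF integral_norm_bound]) (simp only: norm_mult norm_e norm_of_real mult_1_left order_refl)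
  also have "\<dots> \<le> sqrt (\<integral>x. (u (x + h) - u x)\<^sup>2 \<partial>lborel) * sqrt (\<integral>x. (u (x + h) + u x)\<^sup>2 \<partial>lborel)"
    by (rule integral_abs_mult_le_sqrt[OF _ _ square_integrable_add_diff(2,1)[OF _ _ u_sq_h u_sq]])
       measurable
  also have "\<dots> \<le> (\<bar>t\<bar> * sqrt (\<integral>x. (G x \<bullet> b)\<^sup>2 \<partial>lborel)) * (2 * sqrt (\<integral>x. (u x)\<^sup>2 \<partial>lborel))"
  proof (rule mult_mono)
    show "sqrt (\<integral>x. (u (x + h) - u x)\<^sup>2 \<partial>lborel) \<le> \<bar>t\<bar> * sqrt (\<integral>x. (G x \<bullet> b)\<^sup>2 \<partial>lborel)"
      using real_sqrt_le_mono[OF W12_translate_L2_bound[OF W b, of t]]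
      by (simp add: h_def real_sqrt_mult)
    have "integrable lborel (\<lambda>x. (u (x + h) + u x)\<^sup>2)"
      by (rule square_integrable_add_diff(1)[OF _ _ u_sq_h u_sq]) measurable
    moreover have "integrable lborel (\<lambda>x. 2 * (u (x + h))\<^sup>2 + 2 * (u x)\<^sup>2)"
      by (intro Bochner_Integration.integrable_add integrable_mult_right u_sq u_sq_h)
    moreover have "(u (x + h) + u x)\<^sup>2 \<le> 2 * (u (x + h))\<^sup>2 + 2 * (u x)\<^sup>2" for x
      using zero_le_power2[of "u (x + h) - u x"] by (simp add: power2_eq_square algebra_simps)
    ultimately have "(\<integral>x. (u (x + h) + u x)\<^sup>2 \<partial>lborel) \<le> (\<integral>x. 2 * (u (x + h))\<^sup>2 + 2 * (u x)\<^sup>2 \<partial>lborel)"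
      by (rule integral_mono)
    also have "\<dots> = 2\<^sup>2 * (\<integral>x. (u x)\<^sup>2 \<partial>lborel)"
      using u_sq u_sq_h lborel_integral_translate[of "\<lambda>x. (u x)\<^sup>2" h] by simp
    finally have "sqrt (\<integral>x. (u (x + h) + u x)\<^sup>2 \<partial>lborel) \<le> sqrt (2\<^sup>2 * (\<integral>x. (u x)\<^sup>2 \<partial>lborel))"
      by (rule real_sqrt_le_mono)
    then show "sqrt (\<integral>x. (u (x + h) + u x)\<^sup>2 \<partial>lborel) \<le> 2 * sqrt (\<integral>x. (u x)\<^sup>2 \<partial>lborel)"
      by (simp add: real_sqrt_mult)
  qed auto
  finally show ?thesis by (simp add: h_def mult_ac)
qed

lemma tendsto_norm_cis_diff_quotient:
  "((\<lambda>t. cmod (cis (t * c) - 1) / \<bar>t\<bar>) \<longlongrightarrow> \<bar>c\<bar>) (at 0)"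
proof -
  have "((\<lambda>t. cos (t * c)) has_real_derivative (- sin (0 * c) * c)) (at 0)"
    by (auto intro!: derivative_eq_intros)
  then have cos_lim: "((\<lambda>t. (cos (t * c) - 1) / t) \<longlongrightarrow> 0) (at 0)" by (simp add: DERIV_def)
  have "((\<lambda>t. sin (t * c)) has_real_derivative (cos (0 * c) * c)) (at 0)"
    by (auto intro!: derivative_eq_intros)
  then have sin_lim: "((\<lambda>t. sin (t * c) / t) \<longlongrightarrow> c) (at 0)" by (simp add: DERIV_def)
  have "((\<lambda>t. sqrt (((cos (t * c) - 1) / t)\<^sup>2 + (sin (t * c) / t)\<^sup>2)) \<longlongrightarrow> sqrt (0\<^sup>2 + c\<^sup>2)) (at 0)"
    by (intro tendsto_intros cos_lim sin_lim)
  moreover have "\<forall>\<^sub>F t in at 0.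
      sqrt (((cos (t * c) - 1) / t)\<^sup>2 + (sin (t * c) / t)\<^sup>2) = cmod (cis (t * c) - 1) / \<bar>t\<bar>"
  proof (rule always_eventually, rule allI)
    fix t :: real
    have "((cos (t * c) - 1) / t)\<^sup>2 + (sin (t * c) / t)\<^sup>2 = ((cos (t * c) - 1)\<^sup>2 + (sin (t * c))\<^sup>2) / \<bar>t\<bar>\<^sup>2"
      by (simp add: power_divide add_divide_distrib)
    then show "sqrt (((cos (t * c) - 1) / t)\<^sup>2 + (sin (t * c) / t)\<^sup>2) = cmod (cis (t * c) - 1) / \<bar>t\<bar>"
      by (simp add: cmod_def real_sqrt_divide)
  qed
  ultimately show ?thesis by (simp add: tendsto_cong)
qed

lemma norm_fourier_mult_inner_Basis_le:
  fixes u :: "'a::euclidean_space \<Rightarrow> real"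
  assumes W: "W12_with_grad u G" and b: "b \<in> Basis"
  shows "\<bar>\<xi> \<bullet> b\<bar> * cmod (fourier (\<lambda>x. (u x)\<^sup>2) \<xi>)
          \<le> 2 * sqrt (\<integral>x. (G x \<bullet> b)\<^sup>2 \<partial>lborel) * sqrt (\<integral>x. (u x)\<^sup>2 \<partial>lborel)"
proof -
  define F where "F = cmod (fourier (\<lambda>x. (u x)\<^sup>2) \<xi>)"
  define K where "K = 2 * sqrt (\<integral>x. (G x \<bullet> b)\<^sup>2 \<partial>lborel) * sqrt (\<integral>x. (u x)\<^sup>2 \<partial>lborel)"
  \<comment> \<open>let the translation length t tend to 0 in the difference-quotient bound\<close>
  have "((\<lambda>t. cmod (cis (t * (\<xi> \<bullet> b)) - 1) / \<bar>t\<bar> * F) \<longlongrightarrow> \<bar>\<xi> \<bullet> b\<bar> * F) (at 0)"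
    by (intro tendsto_intros tendsto_norm_cis_diff_quotient)
  moreover have "\<forall>\<^sub>F t in at 0. cmod (cis (t * (\<xi> \<bullet> b)) - 1) / \<bar>t\<bar> * F \<le> K"
  proof (rule always_eventually, rule allI)
    fix t :: real
    have bound: "cmod (cis (t * (\<xi> \<bullet> b)) - 1) * F \<le> \<bar>t\<bar> * K"
      using fourier_translate_diff_bound[OF W b, of t \<xi>] by (simp add: F_def K_def norm_mult mult_ac)
    show "cmod (cis (t * (\<xi> \<bullet> b)) - 1) / \<bar>t\<bar> * F \<le> K"
    proof (cases "t = 0")
      case False
      then show ?thesis using bound by (simp add: pos_divide_le_eq mult.commute)
    qed (simp add: K_def)
  qed
  ultimately have "\<bar>\<xi> \<bullet> b\<bar> * F \<le> K" by (rule tendsto_upperbound) simp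
  then show ?thesis by (simp add: F_def K_def)
qed

lemma norm_fourier_square_mult_norm_le:
  fixes u :: "'a::euclidean_space \<Rightarrow> real"
  assumes W: "W12_with_grad u G"
  shows "(norm \<xi>)\<^sup>2 * (cmod (fourier (\<lambda>x. (u x)\<^sup>2) \<xi>))\<^sup>2
          \<le> 4 * (\<integral>x. (u x)\<^sup>2 \<partial>lborel) * (\<integral>x. (norm (G x))\<^sup>2 \<partial>lborel)"
proof -
  from W have [measurable]: "G \<in> borel_measurable borel" and G_sq: "integrable lborel (\<lambda>x. (norm (G x))\<^sup>2)"
    unfolding W12_with_grad_def by auto
  define F where "F = cmod (fourier (\<lambda>x. (u x)\<^sup>2) \<xi>)"
  define U where "U = (\<integral>x. (u x)\<^sup>2 \<partial>lborel)"
  have "U \<ge> 0" unfolding U_def by simp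
  have norm_sq: "(norm x)\<^sup>2 = (\<Sum>b\<in>Basis. (x \<bullet> b)\<^sup>2)" for x :: 'a
    unfolding power2_norm_eq_inner by (simp only: euclidean_inner[of x x] power2_eq_square)
  define g where "g b = (\<integral>x. (G x \<bullet> b)\<^sup>2 \<partial>lborel)" for b
  have "(norm \<xi>)\<^sup>2 * F\<^sup>2 = (\<Sum>b\<in>Basis. (\<bar>\<xi> \<bullet> b\<bar> * F)\<^sup>2)"
    unfolding norm_sq sum_distrib_right by (simp only: power_mult_distrib power2_abs)
  also have "\<dots> \<le> (\<Sum>b\<in>Basis. (2 * sqrt (g b) * sqrt U)\<^sup>2)"
  proof (rule sum_mono)
    fix b :: 'a assume "b \<in> Basis"
    from norm_fourier_mult_inner_Basis_le[OF W this, of \<xi>]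
    show "(\<bar>\<xi> \<bullet> b\<bar> * F)\<^sup>2 \<le> (2 * sqrt (g b) * sqrt U)\<^sup>2"
      unfolding F_def U_def g_def by (rule power_mono) simp
  qed
  also have "\<dots> = (\<Sum>b\<in>Basis. 4 * U * g b)"
  proof (rule sum.cong)
    fix b :: 'a
    have "g b \<ge> 0" unfolding g_def by simp
    then show "(2 * sqrt (g b) * sqrt U)\<^sup>2 = 4 * U * g b"
      using \<open>U \<ge> 0\<close> by (simp add: power_mult_distrib)
  qed simp
  also have "\<dots> = 4 * U * (\<Sum>b\<in>Basis. g b)" by (rule sum_distrib_left[symmetric])
  also have "(\<Sum>b\<in>Basis. g b) = (\<integral>x. (norm (G x))\<^sup>2 \<partial>lborel)"
    unfolding norm_sq g_def
    by (rule Bochner_Integration.integral_sum[symmetric]) (rule integrable_inner_Basis_square[OF _ G_sq], simp_all)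
  finally show ?thesis by (simp add: F_def U_def)
qed

lemma norm_fourier_square_le_cutoff:
  fixes u :: "'a::euclidean_space \<Rightarrow> real"
  assumes W: "W12_with_grad u G" and u_norm: "(\<integral>x. (u x)\<^sup>2 \<partial>lborel) = 1" and "R > 0"
  shows "(cmod (fourier (\<lambda>x. (u x)\<^sup>2) \<xi>))\<^sup>2 \<le> indicator {\<xi>. norm \<xi> \<le> R} \<xi>
          + 4 * (\<integral>x. (norm (G x))\<^sup>2 \<partial>lborel) * (indicator {\<xi>. norm \<xi> > R} \<xi> / (norm \<xi>)\<^sup>2)"
proof (cases "norm \<xi> \<le> R")
  case True
  have "cmod (fourier (\<lambda>x. (u x)\<^sup>2) \<xi>) \<le> 1" using norm_fourier_square_le[of u \<xi>] u_norm by simp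
  then have "(cmod (fourier (\<lambda>x. (u x)\<^sup>2) \<xi>))\<^sup>2 \<le> 1\<^sup>2" by (intro power_mono) simp_all
  then show ?thesis using True by simp
next
  case False
  then have "(norm \<xi>)\<^sup>2 > 0" using \<open>R > 0\<close> by (intro zero_less_power) linarith
  moreover have "(norm \<xi>)\<^sup>2 * (cmod (fourier (\<lambda>x. (u x)\<^sup>2) \<xi>))\<^sup>2 \<le> 4 * (\<integral>x. (norm (G x))\<^sup>2 \<partial>lborel)"
    using norm_fourier_square_mult_norm_le[OF W, of \<xi>] u_norm by simp
  ultimately have "(cmod (fourier (\<lambda>x. (u x)\<^sup>2) \<xi>))\<^sup>2 \<le> 4 * (\<integral>x. (norm (G x))\<^sup>2 \<partial>lborel) / (norm \<xi>)\<^sup>2"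
    by (simp add: pos_le_divide_eq mult.commute)
  then show ?thesis using False by simp
qed

lemma norm_fourier_square_product_le_cutoff:
  fixes u v :: "'a::euclidean_space \<Rightarrow> real"
  assumes "W12_with_grad u G" "(\<integral>x. (u x)\<^sup>2 \<partial>lborel) = 1"
    and "W12_with_grad v H" "(\<integral>x. (v x)\<^sup>2 \<partial>lborel) = 1" and "R > 0"
  shows "cmod (fourier (\<lambda>x. (u x)\<^sup>2) \<xi> * cnj (fourier (\<lambda>x. (v x)\<^sup>2) \<xi>)) \<le> indicator {\<xi>. norm \<xi> \<le> R} \<xi>
          + 2 * ((\<integral>x. (norm (G x))\<^sup>2 \<partial>lborel) + (\<integral>x. (norm (H x))\<^sup>2 \<partial>lborel))
            * (indicator {\<xi>. norm \<xi> > R} \<xi> / (norm \<xi>)\<^sup>2)"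
proof -
  define a where "a = cmod (fourier (\<lambda>x. (u x)\<^sup>2) \<xi>)"
  define b where "b = cmod (fourier (\<lambda>x. (v x)\<^sup>2) \<xi>)"
  have "a * b \<le> (a\<^sup>2 + b\<^sup>2) / 2"
    using zero_le_power2[of "a - b"] by (simp add: power2_eq_square algebra_simps)
  also have "\<dots> \<le> indicator {\<xi>. norm \<xi> \<le> R} \<xi>
          + 2 * ((\<integral>x. (norm (G x))\<^sup>2 \<partial>lborel) + (\<integral>x. (norm (H x))\<^sup>2 \<partial>lborel))
            * (indicator {\<xi>. norm \<xi> > R} \<xi> / (norm \<xi>)\<^sup>2)"
    using norm_fourier_square_le_cutoff[OF assms(1,2,5), of \<xi>]
      norm_fourier_square_le_cutoff[OF assms(3,4,5), of \<xi>]
    unfolding a_def b_def by (simp add: algebra_simps)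
  finally show ?thesis by (simp add: a_def b_def norm_mult)
qed

section \<open>Spectral and temporal integration\<close>

lemma spectral_pairing_bound:
  fixes u v :: "'a::euclidean_space \<Rightarrow> real" and \<nu> :: "'a measure"
  assumes sets_\<nu>: "sets \<nu> = sets borel"
    and u: "W12_with_grad u G" "(\<integral>x. (u x)\<^sup>2 \<partial>lborel) = 1"
    and v: "W12_with_grad v H" "(\<integral>x. (v x)\<^sup>2 \<partial>lborel) = 1" and "R > 0"
  shows "ennreal (cmod (\<integral>\<xi>. fourier (\<lambda>x. (u x)\<^sup>2) \<xi> * cnj (fourier (\<lambda>x. (v x)\<^sup>2) \<xi>) \<partial>\<nu>))
    \<le> emeasure \<nu> {\<xi>. norm \<xi> \<le> R}
       + ennreal (2 * ((\<integral>x. (norm (G x))\<^sup>2 \<partial>lborel) + (\<integral>x. (norm (H x))\<^sup>2 \<partial>lborel)))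
         * (\<integral>\<^sup>+ \<xi>. ennreal (indicator {\<xi>. norm \<xi> > R} \<xi> / (norm \<xi>)\<^sup>2) \<partial>\<nu>)"
proof -
  define c where "c = 2 * ((\<integral>x. (norm (G x))\<^sup>2 \<partial>lborel) + (\<integral>x. (norm (H x))\<^sup>2 \<partial>lborel))"
  have "c \<ge> 0" unfolding c_def by simp
  have [measurable]: "f \<in> borel_measurable \<nu>" if "f \<in> borel_measurable borel" for f :: "'a \<Rightarrow> ennreal"
    using that by (simp add: measurable_cong_sets[OF sets_\<nu> refl])
  have "ennreal (cmod (\<integral>\<xi>. fourier (\<lambda>x. (u x)\<^sup>2) \<xi> * cnj (fourier (\<lambda>x. (v x)\<^sup>2) \<xi>) \<partial>\<nu>))
     \<le> (\<integral>\<^sup>+ \<xi>. ennreal (cmod (fourier (\<lambda>x. (u x)\<^sup>2) \<xi> * cnj (fourier (\<lambda>x. (v x)\<^sup>2) \<xi>))) \<partial>\<nu>)"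
    by (cases "integrable \<nu> (\<lambda>\<xi>. fourier (\<lambda>x. (u x)\<^sup>2) \<xi> * cnj (fourier (\<lambda>x. (v x)\<^sup>2) \<xi>))")
       (simp_all add: integral_norm_bound_ennreal not_integrable_integral_eq)
  also have "\<dots> \<le> (\<integral>\<^sup>+ \<xi>. ennreal (indicator {\<xi>. norm \<xi> \<le> R} \<xi>)
      + ennreal c * ennreal (indicator {\<xi>. norm \<xi> > R} \<xi> / (norm \<xi>)\<^sup>2) \<partial>\<nu>)"
  proof (rule nn_integral_mono)
    fix \<xi>
    have "ennreal (cmod (fourier (\<lambda>x. (u x)\<^sup>2) \<xi> * cnj (fourier (\<lambda>x. (v x)\<^sup>2) \<xi>)))
        \<le> ennreal (indicator {\<xi>. norm \<xi> \<le> R} \<xi> + c * (indicator {\<xi>. norm \<xi> > R} \<xi> / (norm \<xi>)\<^sup>2))"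
      unfolding c_def by (intro ennreal_leI norm_fourier_square_product_le_cutoff[OF u v \<open>R > 0\<close>])
    also have "\<dots> = ennreal (indicator {\<xi>. norm \<xi> \<le> R} \<xi>)
        + ennreal c * ennreal (indicator {\<xi>. norm \<xi> > R} \<xi> / (norm \<xi>)\<^sup>2)"
    proof -
      have q: "0 \<le> indicator {\<xi>::'a. norm \<xi> > R} \<xi> / (norm \<xi>)\<^sup>2" by simp
      have i: "0 \<le> (indicator {\<xi>::'a. norm \<xi> \<le> R} \<xi> :: real)" by simp
      show ?thesis
        by (simp only: ennreal_plus[OF i mult_nonneg_nonneg[OF \<open>c \<ge> 0\<close> q]] ennreal_mult[OF \<open>c \<ge> 0\<close> q])
    qed
    finally show "ennreal (cmod (fourier (\<lambda>x. (u x)\<^sup>2) \<xi> * cnj (fourier (\<lambda>x. (v x)\<^sup>2) \<xi>)))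
        \<le> ennreal (indicator {\<xi>. norm \<xi> \<le> R} \<xi>) + ennreal c * ennreal (indicator {\<xi>. norm \<xi> > R} \<xi> / (norm \<xi>)\<^sup>2)" .
  qed
  also have "\<dots> = emeasure \<nu> {\<xi>. norm \<xi> \<le> R}
      + ennreal c * (\<integral>\<^sup>+ \<xi>. ennreal (indicator {\<xi>. norm \<xi> > R} \<xi> / (norm \<xi>)\<^sup>2) \<partial>\<nu>)"
  proof -
    have "{\<xi>::'a. norm \<xi> \<le> R} \<in> sets \<nu>" unfolding sets_\<nu> by measurable
    moreover have "(\<lambda>\<xi>. ennreal (indicator {\<xi>::'a. norm \<xi> > R} \<xi> / (norm \<xi>)\<^sup>2)) \<in> borel_measurable \<nu>"
      by measurable
    ultimately show ?thesis by (simp add: nn_integral_add nn_integral_cmult ennreal_indicator)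
  qed
  finally show ?thesis unfolding c_def .
qed

lemma nn_integral_finite_by_spectral_weight:
  fixes \<nu> :: "'a::euclidean_space measure" and f :: "'a \<Rightarrow> real"
  assumes sets_\<nu>: "sets \<nu> = sets borel" and fin: "(\<integral>\<^sup>+ \<xi>. ennreal (1 / (1 + (norm \<xi>)\<^sup>2)) \<partial>\<nu>) < \<infinity>"
    and bound: "\<And>\<xi>. f \<xi> \<le> c * (1 / (1 + (norm \<xi>)\<^sup>2))" and "c \<ge> 0"
  shows "(\<integral>\<^sup>+ \<xi>. ennreal (f \<xi>) \<partial>\<nu>) < \<infinity>"
proof -
  have "(\<integral>\<^sup>+ \<xi>. ennreal (f \<xi>) \<partial>\<nu>) \<le> (\<integral>\<^sup>+ \<xi>. ennreal c * ennreal (1 / (1 + (norm \<xi>)\<^sup>2)) \<partial>\<nu>)"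
    using bound \<open>c \<ge> 0\<close> by (intro nn_integral_mono) (simp add: ennreal_mult[symmetric] ennreal_leI)
  also have "\<dots> = ennreal c * (\<integral>\<^sup>+ \<xi>. ennreal (1 / (1 + (norm \<xi>)\<^sup>2)) \<partial>\<nu>)"
    by (rule nn_integral_cmult) (simp add: measurable_cong_sets[OF sets_\<nu> refl])
  also have "\<dots> < \<infinity>" using fin by (simp add: ennreal_mult_less_top)
  finally show ?thesis .
qed

lemma spectral_ball_finite:
  fixes \<nu> :: "'a::euclidean_space measure"
  assumes sets_\<nu>: "sets \<nu> = sets borel" and fin: "(\<integral>\<^sup>+ \<xi>. ennreal (1 / (1 + (norm \<xi>)\<^sup>2)) \<partial>\<nu>) < \<infinity>"
  shows "emeasure \<nu> {\<xi>. norm \<xi> \<le> R} < \<infinity>"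
proof -
  have "{\<xi>::'a. norm \<xi> \<le> R} \<in> sets \<nu>" unfolding sets_\<nu> by measurable
  then have "emeasure \<nu> {\<xi>. norm \<xi> \<le> R} = (\<integral>\<^sup>+ \<xi>. ennreal (indicator {\<xi>. norm \<xi> \<le> R} \<xi>) \<partial>\<nu>)"
    by (simp add: ennreal_indicator)
  also have "\<dots> < \<infinity>"
  proof (rule nn_integral_finite_by_spectral_weight[OF sets_\<nu> fin, where c="1 + R\<^sup>2"])
    fix \<xi> :: 'a
    show "indicator {\<xi>. norm \<xi> \<le> R} \<xi> \<le> (1 + R\<^sup>2) * (1 / (1 + (norm \<xi>)\<^sup>2))"
    proof (cases "norm \<xi> \<le> R")
      case True
      then have "(norm \<xi>)\<^sup>2 \<le> R\<^sup>2" by (intro power_mono) simp_all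
      then show ?thesis using True by (simp add: field_simps add_pos_nonneg)
    qed (simp add: add_pos_nonneg)
  qed simp
  finally show ?thesis .
qed

lemma spectral_tail_finite:
  fixes \<nu> :: "'a::euclidean_space measure"
  assumes sets_\<nu>: "sets \<nu> = sets borel" and fin: "(\<integral>\<^sup>+ \<xi>. ennreal (1 / (1 + (norm \<xi>)\<^sup>2)) \<partial>\<nu>) < \<infinity>"
    and "R > 0"
  shows "(\<integral>\<^sup>+ \<xi>. ennreal (indicator {\<xi>. norm \<xi> > R} \<xi> / (norm \<xi>)\<^sup>2) \<partial>\<nu>) < \<infinity>"
proof (rule nn_integral_finite_by_spectral_weight[OF sets_\<nu> fin, where c="(1 + R\<^sup>2) / R\<^sup>2"])
  fix \<xi> :: 'a
  show "indicator {\<xi>. norm \<xi> > R} \<xi> / (norm \<xi>)\<^sup>2 \<le> (1 + R\<^sup>2) / R\<^sup>2 * (1 / (1 + (norm \<xi>)\<^sup>2))"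
  proof (cases "norm \<xi> > R")
    case True
    then have "R\<^sup>2 \<le> (norm \<xi>)\<^sup>2" using \<open>R > 0\<close> by (intro power_mono) simp_all
    then have "R\<^sup>2 * (1 + (norm \<xi>)\<^sup>2) \<le> (1 + R\<^sup>2) * (norm \<xi>)\<^sup>2" by (simp add: algebra_simps)
    moreover have "norm \<xi> > 0" using True \<open>R > 0\<close> by linarith
    ultimately show ?thesis using True \<open>R > 0\<close> by (simp add: field_simps add_pos_nonneg)
  qed (simp add: add_pos_nonneg)
qed simp

lemma spectral_tail_small:
  fixes \<nu> :: "'a::euclidean_space measure"
  assumes sets_\<nu>: "sets \<nu> = sets borel" and fin: "(\<integral>\<^sup>+ \<xi>. ennreal (1 / (1 + (norm \<xi>)\<^sup>2)) \<partial>\<nu>) < \<infinity>"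
    and "K \<ge> 0"
  shows "\<exists>R>0. ennreal K * (\<integral>\<^sup>+ \<xi>. ennreal (indicator {\<xi>. norm \<xi> > R} \<xi> / (norm \<xi>)\<^sup>2) \<partial>\<nu>) < ennreal (1/2)"
proof -
  have meas: "f \<in> borel_measurable \<nu>" if "f \<in> borel_measurable borel" for f :: "'a \<Rightarrow> real"
    using that by (simp add: measurable_cong_sets[OF sets_\<nu> refl])
  define f where "f n \<xi> = indicator {\<xi>. norm \<xi> > real (Suc n)} \<xi> / (norm \<xi>)\<^sup>2" for n and \<xi> :: 'a
  define w where "w \<xi> = 2 * (1 / (1 + (norm \<xi>)\<^sup>2))" for \<xi> :: 'a
  have f_meas: "f n \<in> borel_measurable \<nu>" for n unfolding f_def by (rule meas) measurable
  have w_meas: "w \<in> borel_measurable \<nu>" unfolding w_def by (rule meas) measurable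
  have w_fin: "(\<integral>\<^sup>+ \<xi>. ennreal (w \<xi>) \<partial>\<nu>) < \<infinity>"
    unfolding w_def by (rule nn_integral_finite_by_spectral_weight[OF sets_\<nu> fin, where c=2]) simp_all
  have w_int: "integrable \<nu> w"
    by (rule integrableI_nonneg[OF w_meas _ w_fin]) (simp add: w_def add_pos_nonneg)
  have f_dom: "\<bar>f n \<xi>\<bar> \<le> w \<xi>" for n \<xi>
  proof (cases "norm \<xi> > real (Suc n)")
    case True
    then have "(norm \<xi>)\<^sup>2 \<ge> 1" by (simp add: one_le_power)
    then have "1 / (norm \<xi>)\<^sup>2 \<le> 2 / (1 + (norm \<xi>)\<^sup>2)"
      by (simp add: divide_le_eq le_divide_eq add_pos_nonneg)
    then show ?thesis using True by (simp add: f_def w_def)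
  qed (simp add: f_def w_def add_pos_nonneg)
  have f_int: "integrable \<nu> (f n)" for n
    by (rule Bochner_Integration.integrable_bound[OF w_int f_meas AE_I2])
       (use f_dom in \<open>force intro: order_trans[OF _ abs_ge_self]\<close>)
  have "(\<lambda>n. \<integral>\<xi>. f n \<xi> \<partial>\<nu>) \<longlonglongrightarrow> (\<integral>\<xi>. 0 \<partial>\<nu>)"
  proof (rule integral_dominated_convergence[OF _ f_meas w_int])
    show "AE \<xi> in \<nu>. (\<lambda>n. f n \<xi>) \<longlonglongrightarrow> 0"
    proof (rule AE_I2)
      fix \<xi> :: 'a
      obtain N where N: "real N \<ge> norm \<xi>" using real_arch_simple by blast
      have "\<forall>\<^sub>F n in sequentially. f n \<xi> = 0"
        using eventually_ge_at_top[of N] by eventually_elim (use N in \<open>simp add: f_def\<close>)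
      then show "(\<lambda>n. f n \<xi>) \<longlonglongrightarrow> 0" by (rule tendsto_eventually)
    qed
  qed (use f_dom in simp_all)
  then have "(\<lambda>n. K * (\<integral>\<xi>. f n \<xi> \<partial>\<nu>)) \<longlonglongrightarrow> 0" by (auto intro: tendsto_mult_right_zero)
  then have "\<forall>\<^sub>F n in sequentially. K * (\<integral>\<xi>. f n \<xi> \<partial>\<nu>) < 1/2"
    by (rule order_tendstoD) simp
  then obtain n where n: "K * (\<integral>\<xi>. f n \<xi> \<partial>\<nu>) < 1/2" by (auto dest: eventually_happens)
  have "(\<integral>\<^sup>+ \<xi>. ennreal (f n \<xi>) \<partial>\<nu>) = ennreal (\<integral>\<xi>. f n \<xi> \<partial>\<nu>)"
    by (rule nn_integral_eq_integral[OF f_int]) (simp add: f_def)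
  moreover have "(\<integral>\<xi>. f n \<xi> \<partial>\<nu>) \<ge> 0" by (simp add: f_def)
  ultimately have "ennreal K * (\<integral>\<^sup>+ \<xi>. ennreal (f n \<xi>) \<partial>\<nu>) = ennreal (K * (\<integral>\<xi>. f n \<xi> \<partial>\<nu>))"
    using \<open>K \<ge> 0\<close> by (simp add: ennreal_mult)
  also have "\<dots> < ennreal (1/2)" using n by (intro ennreal_lessI) simp_all
  finally have "ennreal K * (\<integral>\<^sup>+ \<xi>. ennreal (f n \<xi>) \<partial>\<nu>) < ennreal (1/2)" .
  then show ?thesis unfolding f_def by (intro exI[of _ "real (Suc n)"]) simp
qed

lemma nn_integral_kernel_row_le:
  fixes \<eta>0 :: "real \<Rightarrow> real"
  assumes [measurable]: "\<eta>0 \<in> borel_measurable borel" and "s \<in> {0..1}"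
  shows "(\<integral>\<^sup>+ r. ennreal (indicator {0..1} r * \<eta>0 (s - r)) \<partial>lborel)
          \<le> (\<integral>\<^sup>+ t. ennreal (indicator {-1..1} t * \<eta>0 t) \<partial>lborel)"
proof -
  have "(\<integral>\<^sup>+ t. ennreal (indicator {-1..1} t * \<eta>0 t) \<partial>lborel)
      = (\<integral>\<^sup>+ r. ennreal (indicator {-1..1} (s - r) * \<eta>0 (s - r)) \<partial>lborel)"
    using nn_integral_real_affine[of "\<lambda>t. ennreal (indicator {-1..1} t * \<eta>0 t)" "-1" s] by simp
  moreover have "ennreal (indicator {0..1} r * \<eta>0 (s - r)) \<le> ennreal (indicator {-1..1} (s - r) * \<eta>0 (s - r))"
    for r
    using \<open>s \<in> {0..1}\<close> by (cases "r \<in> {0..1}") (auto simp: indicator_def)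
  ultimately show ?thesis by (simp add: nn_integral_mono)
qed

lemma nn_integral_kernel_column_le:
  fixes \<eta>0 :: "real \<Rightarrow> real"
  assumes [measurable]: "\<eta>0 \<in> borel_measurable borel" and "r \<in> {0..1}"
  shows "(\<integral>\<^sup>+ s. ennreal (indicator {0..1} s * \<eta>0 (s - r)) \<partial>lborel)
          \<le> (\<integral>\<^sup>+ t. ennreal (indicator {-1..1} t * \<eta>0 t) \<partial>lborel)"
proof -
  have "(\<integral>\<^sup>+ t. ennreal (indicator {-1..1} t * \<eta>0 t) \<partial>lborel)
      = (\<integral>\<^sup>+ s. ennreal (indicator {-1..1} (s - r) * \<eta>0 (s - r)) \<partial>lborel)"
    using nn_integral_real_affine[of "\<lambda>t. ennreal (indicator {-1..1} t * \<eta>0 t)" 1 "-r"] by simp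
  moreover have "ennreal (indicator {0..1} s * \<eta>0 (s - r)) \<le> ennreal (indicator {-1..1} (s - r) * \<eta>0 (s - r))"
    for s
    using \<open>r \<in> {0..1}\<close> by (cases "s \<in> {0..1}") (auto simp: indicator_def)
  ultimately show ?thesis by (simp add: nn_integral_mono)
qed

lemma nn_integral_kernel_quadratic_le:
  fixes \<eta>0 :: "real \<Rightarrow> real" and N :: "real \<Rightarrow> ennreal"
  assumes [measurable]: "\<eta>0 \<in> borel_measurable borel" "N \<in> borel_measurable borel"
  shows "(\<integral>\<^sup>+ s. \<integral>\<^sup>+ r. ennreal (indicator {0..1} s * indicator {0..1} r * \<eta>0 (s - r))
              * (A + c * (N s + N r)) \<partial>lborel \<partial>lborel)
        \<le> (\<integral>\<^sup>+ t. ennreal (indicator {-1..1} t * \<eta>0 t) \<partial>lborel)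
           * (A + 2 * c * (\<integral>\<^sup>+ s. indicator {0..1} s * N s \<partial>lborel))"
    (is "?lhs \<le> ?L * (A + 2 * c * ?D)")
proof -
  define E where "E s r = ennreal (indicator {0..1} s * indicator {0..1} r * \<eta>0 (s - r))" for s r
  have [measurable]: "(\<lambda>(s, r). E s r) \<in> borel_measurable (lborel \<Otimes>\<^sub>M lborel)"
    unfolding E_def by measurable
  have [measurable]: "E s \<in> borel_measurable lborel" for s unfolding E_def by measurable
  have [measurable]: "(\<lambda>s. E s r) \<in> borel_measurable lborel" for r unfolding E_def by measurable
  have row: "(\<integral>\<^sup>+ r. E s r \<partial>lborel) \<le> indicator {0..1} s * ?L" for s
    using nn_integral_kernel_row_le[OF assms(1), of s] by (cases "s \<in> {0..1}") (simp_all add: E_def)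
  have column: "(\<integral>\<^sup>+ s. E s r \<partial>lborel) \<le> indicator {0..1} r * ?L" for r
    using nn_integral_kernel_column_le[OF assms(1), of r] by (cases "r \<in> {0..1}") (simp_all add: E_def)
  have split: "?lhs = (\<integral>\<^sup>+ s. (A + c * N s) * (\<integral>\<^sup>+ r. E s r \<partial>lborel) \<partial>lborel)
      + (\<integral>\<^sup>+ s. \<integral>\<^sup>+ r. c * (E s r * N r) \<partial>lborel \<partial>lborel)"
  proof -
    have "(\<integral>\<^sup>+ r. E s r * (A + c * (N s + N r)) \<partial>lborel)
        = (A + c * N s) * (\<integral>\<^sup>+ r. E s r \<partial>lborel) + (\<integral>\<^sup>+ r. c * (E s r * N r) \<partial>lborel)" for s
    proof -
      have "(\<integral>\<^sup>+ r. E s r * (A + c * (N s + N r)) \<partial>lborel)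
          = (\<integral>\<^sup>+ r. (A + c * N s) * E s r + c * (E s r * N r) \<partial>lborel)"
        by (intro nn_integral_cong) (simp add: algebra_simps)
      also have "\<dots> = (\<integral>\<^sup>+ r. (A + c * N s) * E s r \<partial>lborel) + (\<integral>\<^sup>+ r. c * (E s r * N r) \<partial>lborel)"
        by (rule nn_integral_add) measurable
      finally show ?thesis by (simp add: nn_integral_cmult)
    qed
    then have "?lhs = (\<integral>\<^sup>+ s. (A + c * N s) * (\<integral>\<^sup>+ r. E s r \<partial>lborel)
        + (\<integral>\<^sup>+ r. c * (E s r * N r) \<partial>lborel) \<partial>lborel)"
      by (simp add: E_def)
    also have "\<dots> = (\<integral>\<^sup>+ s. (A + c * N s) * (\<integral>\<^sup>+ r. E s r \<partial>lborel) \<partial>lborel)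
        + (\<integral>\<^sup>+ s. \<integral>\<^sup>+ r. c * (E s r * N r) \<partial>lborel \<partial>lborel)"
      by (rule nn_integral_add) measurable
    finally show ?thesis .
  qed
  have "(\<integral>\<^sup>+ s. (A + c * N s) * (\<integral>\<^sup>+ r. E s r \<partial>lborel) \<partial>lborel)
      \<le> (\<integral>\<^sup>+ s. (A * ?L) * indicator {0..1} s + (c * ?L) * (indicator {0..1} s * N s) \<partial>lborel)"
    by (intro nn_integral_mono order_trans[OF mult_left_mono[OF row]]) (simp_all add: algebra_simps)
  also have "\<dots> = A * ?L + c * ?L * ?D"
    by (simp add: nn_integral_add nn_integral_cmult)
  finally have first: "(\<integral>\<^sup>+ s. (A + c * N s) * (\<integral>\<^sup>+ r. E s r \<partial>lborel) \<partial>lborel) \<le> A * ?L + c * ?L * ?D" .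
  have "(\<integral>\<^sup>+ s. \<integral>\<^sup>+ r. c * (E s r * N r) \<partial>lborel \<partial>lborel)
      = (\<integral>\<^sup>+ r. \<integral>\<^sup>+ s. (c * N r) * E s r \<partial>lborel \<partial>lborel)"
    by (subst lborel_pair.Fubini') (simp_all add: mult_ac)
  also have "\<dots> = (\<integral>\<^sup>+ r. c * N r * (\<integral>\<^sup>+ s. E s r \<partial>lborel) \<partial>lborel)"
    by (simp add: nn_integral_cmult)
  also have "\<dots> \<le> (\<integral>\<^sup>+ r. (c * ?L) * (indicator {0..1} r * N r) \<partial>lborel)"
    by (intro nn_integral_mono order_trans[OF mult_left_mono[OF column]]) (simp_all add: mult_ac)
  also have "\<dots> = c * ?L * ?D" by (simp add: nn_integral_cmult)
  finally have second: "(\<integral>\<^sup>+ s. \<integral>\<^sup>+ r. c * (E s r * N r) \<partial>lborel \<partial>lborel) \<le> c * ?L * ?D" .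
  have "?lhs \<le> (A * ?L + c * ?L * ?D) + c * ?L * ?D"
    unfolding split by (rule add_mono[OF first second])
  then show ?thesis by (simp add: algebra_simps mult_2)
qed

lemma ennreal_norm_integral_le:
  fixes f :: "'b \<Rightarrow> 'c::{banach,second_countable_topology}"
  shows "ennreal (norm (integral\<^sup>L M f)) \<le> (\<integral>\<^sup>+ x. ennreal (norm (f x)) \<partial>M)"
  by (cases "integrable M f") (simp_all add: integral_norm_bound_ennreal not_integrable_integral_eq)

lemma dirichlet_nonneg: "dirichlet G \<ge> 0"
  unfolding dirichlet_def set_lebesgue_integral_def by (simp add: integral_nonneg_AE)

lemma admissible_dirichlet_nn_integral:
  assumes "admissible g G"
  shows "(\<integral>\<^sup>+ s. indicator {0..1} s * (\<integral>\<^sup>+ x. ennreal ((norm (G s x))\<^sup>2) \<partial>lborel) \<partial>lborel)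
      = ennreal (dirichlet G)"
proof -
  from assms have W: "\<And>s. s \<in> {0..1} \<Longrightarrow> W12_with_grad (g s) (G s)"
    and [measurable]: "(\<lambda>(s, x). G s x) \<in> borel_measurable (lborel \<Otimes>\<^sub>M lborel)"
    and finite: "(\<integral>\<^sup>+ s. indicator {0..1} s * (\<integral>\<^sup>+ x. ennreal ((norm (G s x))\<^sup>2) \<partial>lborel) \<partial>lborel) < \<infinity>"
    unfolding admissible_def by auto
  define n where "n s = indicator {0..1} s * (\<integral>x. (norm (G s x))\<^sup>2 \<partial>lborel)" for s :: real
  have [measurable]: "n \<in> borel_measurable lborel"
    unfolding n_def by measurable
  have n_nonneg: "n s \<ge> 0" for s unfolding n_def by simp
  have n_eq: "indicator {0..1} s * (\<integral>\<^sup>+ x. ennreal ((norm (G s x))\<^sup>2) \<partial>lborel) = ennreal (n s)" for s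
  proof (cases "s \<in> {0..1}")
    case True
    then have "integrable lborel (\<lambda>x. (norm (G s x))\<^sup>2)" using W unfolding W12_with_grad_def by blast
    then show ?thesis using True by (simp add: n_def nn_integral_eq_integral)
  qed (simp add: n_def)
  have "integrable lborel n" using finite n_nonneg by (intro integrableI_nonneg) (simp_all add: n_eq)
  then have "(\<integral>\<^sup>+ s. ennreal (n s) \<partial>lborel) = ennreal (\<integral>s. n s \<partial>lborel)"
    by (rule nn_integral_eq_integral) (simp add: n_nonneg)
  then show ?thesis
    by (simp add: n_eq dirichlet_def set_lebesgue_integral_def n_def)
qed

lemma ennreal_norm_double_set_integral_le:
  fixes F :: "real \<Rightarrow> real \<Rightarrow> 'c::{banach,second_countable_topology}"
  assumes "\<And>s r. s \<in> {0..1} \<Longrightarrow> r \<in> {0..1} \<Longrightarrow> ennreal (norm (F s r)) \<le> K s r"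
  shows "ennreal (norm (set_lebesgue_integral lborel {0..1} (\<lambda>s. set_lebesgue_integral lborel {0..1} (F s))))
      \<le> (\<integral>\<^sup>+ s. \<integral>\<^sup>+ r. K s r \<partial>lborel \<partial>lborel)"
  unfolding set_lebesgue_integral_def
proof (rule order_trans[OF ennreal_norm_integral_le nn_integral_mono])
  fix s :: real
  show "ennreal (norm (indicator {0..1} s *\<^sub>R (LINT r|lborel. indicator {0..1} r *\<^sub>R F s r)))
      \<le> (\<integral>\<^sup>+ r. K s r \<partial>lborel)"
  proof (cases "s \<in> {0..1}")
    case True
    have "ennreal (norm (indicator {0..1} r *\<^sub>R F s r)) \<le> K s r" for r
      using assms[OF True, of r] by (cases "r \<in> {0..1}") simp_all
    then have "ennreal (norm (LINT r|lborel. indicator {0..1} r *\<^sub>R F s r)) \<le> (\<integral>\<^sup>+ r. K s r \<partial>lborel)"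
      by (intro order_trans[OF ennreal_norm_integral_le nn_integral_mono])
    then show ?thesis using True by simp
  qed simp
qed

lemma interaction_le:
  fixes \<eta>0 :: "real \<Rightarrow> real" and \<nu> :: "'a::euclidean_space measure"
  assumes sets_\<nu>: "sets \<nu> = sets borel"
    and \<eta>0_nonneg: "\<And>t. \<eta>0 t \<ge> 0" and \<eta>0_meas: "\<eta>0 \<in> borel_measurable borel"
    and L1: "set_integrable lborel {-1..1} \<eta>0" and adm: "admissible g G" and "R > 0"
    and ball_finite: "emeasure \<nu> {\<xi>. norm \<xi> \<le> R} < \<infinity>"
    and tail_finite: "(\<integral>\<^sup>+ \<xi>. ennreal (indicator {\<xi>. norm \<xi> > R} \<xi> / (norm \<xi>)\<^sup>2) \<partial>\<nu>) < \<infinity>"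
  shows "interaction \<eta>0 \<nu> g \<le> (2 * pi) powi (- int DIM('a)) * (LINT t:{-1..1}|lborel. \<bar>\<eta>0 t\<bar>)
      * (measure \<nu> {\<xi>. norm \<xi> \<le> R}
         + 4 * enn2real (\<integral>\<^sup>+ \<xi>. ennreal (indicator {\<xi>. norm \<xi> > R} \<xi> / (norm \<xi>)\<^sup>2) \<partial>\<nu>) * dirichlet G)"
proof -
  note [measurable] = \<eta>0_meas
  from adm have W: "\<And>s. s \<in> {0..1} \<Longrightarrow> W12_with_grad (g s) (G s)"
    and g_norm: "\<And>s. s \<in> {0..1} \<Longrightarrow> (\<integral>x. (g s x)\<^sup>2 \<partial>lborel) = 1"
    and [measurable]: "(\<lambda>(s, x). G s x) \<in> borel_measurable (lborel \<Otimes>\<^sub>M lborel)"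
    unfolding admissible_def by auto
  define N where "N s = (\<integral>\<^sup>+ x. ennreal ((norm (G s x))\<^sup>2) \<partial>lborel)" for s
  have "N \<in> borel_measurable lborel"
    unfolding N_def by (rule lborel.borel_measurable_nn_integral) measurable
  then have [measurable]: "N \<in> borel_measurable borel" by simp
  have N_eq: "N s = ennreal (\<integral>x. (norm (G s x))\<^sup>2 \<partial>lborel)" if "s \<in> {0..1}" for s
    using W[OF that] unfolding N_def W12_with_grad_def by (simp add: nn_integral_eq_integral)
  define L where "L = (LINT t:{-1..1}|lborel. \<bar>\<eta>0 t\<bar>)"
  have L_eq: "(\<integral>\<^sup>+ t. ennreal (indicator {-1..1} t * \<eta>0 t) \<partial>lborel) = ennreal L"
    using L1 \<eta>0_nonneg unfolding L_def set_integrable_def set_lebesgue_integral_def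
    by (simp add: nn_integral_eq_integral)
  have "L \<ge> 0" unfolding L_def set_lebesgue_integral_def by simp
  define A where "A = emeasure \<nu> {\<xi>. norm \<xi> \<le> R}"
  define J where "J = (\<integral>\<^sup>+ \<xi>. ennreal (indicator {\<xi>. norm \<xi> > R} \<xi> / (norm \<xi>)\<^sup>2) \<partial>\<nu>)"
  define X where "X s r = (\<integral>\<xi>. fourier (\<lambda>x. (g s x)\<^sup>2) \<xi> * cnj (fourier (\<lambda>x. (g r x)\<^sup>2) \<xi>) \<partial>\<nu>)" for s r
  define E where "E s r = ennreal (indicator {0..1} s * indicator {0..1} r * \<eta>0 (s - r))" for s r
  have X_bound: "ennreal (cmod (X s r)) \<le> A + 2 * J * (N s + N r)"
    if "s \<in> {0..1}" "r \<in> {0..1}" for s r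
  proof -
    have "ennreal (cmod (X s r)) \<le> A + ennreal (2 * ((\<integral>x. (norm (G s x))\<^sup>2 \<partial>lborel)
        + (\<integral>x. (norm (G r x))\<^sup>2 \<partial>lborel))) * J"
      unfolding X_def A_def J_def
      by (rule spectral_pairing_bound[OF sets_\<nu> W[OF that(1)] g_norm[OF that(1)] W[OF that(2)]
            g_norm[OF that(2)] \<open>R > 0\<close>])
    also have "\<dots> = A + 2 * J * (N s + N r)"
      using that by (simp add: N_eq ennreal_mult ennreal_plus mult_ac)
    finally show ?thesis .
  qed
  define I where "I = set_lebesgue_integral lborel {0..1} (\<lambda>s. set_lebesgue_integral lborel {0..1}
      (\<lambda>r. X s r * complex_of_real (\<eta>0 (s - r))))"
  have "ennreal (cmod I) \<le> (\<integral>\<^sup>+ s. \<integral>\<^sup>+ r. E s r * (A + 2 * J * (N s + N r)) \<partial>lborel \<partial>lborel)"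
    unfolding I_def
  proof (rule ennreal_norm_double_set_integral_le)
    fix s r :: real assume s: "s \<in> {0..1}" and r: "r \<in> {0..1}"
    have "ennreal (norm (X s r * complex_of_real (\<eta>0 (s - r)))) = ennreal (\<eta>0 (s - r)) * ennreal (cmod (X s r))"
      using \<eta>0_nonneg[of "s - r"] by (simp add: norm_mult ennreal_mult[symmetric] mult.commute)
    also have "\<dots> \<le> ennreal (\<eta>0 (s - r)) * (A + 2 * J * (N s + N r))"
      by (rule mult_left_mono[OF X_bound[OF s r]]) simp
    finally show "ennreal (norm (X s r * complex_of_real (\<eta>0 (s - r)))) \<le> E s r * (A + 2 * J * (N s + N r))"
      using s r by (simp add: E_def)
  qed
  also have "\<dots> \<le> ennreal L * (A + 2 * (2 * J) * ennreal (dirichlet G))"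
    using nn_integral_kernel_quadratic_le[of \<eta>0 N A "2 * J"]
    by (simp add: E_def L_eq N_def admissible_dirichlet_nn_integral[OF adm] mult.assoc)
  also have "\<dots> = ennreal (L * (measure \<nu> {\<xi>. norm \<xi> \<le> R} + 4 * enn2real J * dirichlet G))"
    using ball_finite tail_finite \<open>L \<ge> 0\<close> dirichlet_nonneg[of G]
    by (simp add: A_def J_def emeasure_eq_ennreal_measure ennreal_mult ennreal_plus mult.assoc)
  finally have "cmod I \<le> L * (measure \<nu> {\<xi>. norm \<xi> \<le> R} + 4 * enn2real J * dirichlet G)"
    using \<open>L \<ge> 0\<close> dirichlet_nonneg[of G] by (simp add: ennreal_le_iff)
  then have "Re I \<le> L * (measure \<nu> {\<xi>. norm \<xi> \<le> R} + 4 * enn2real J * dirichlet G)"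
    using complex_Re_le_cmod[of I] by linarith
  then have "(2 * pi) powi (- int DIM('a)) * Re I
      \<le> (2 * pi) powi (- int DIM('a)) * (L * (measure \<nu> {\<xi>. norm \<xi> \<le> R} + 4 * enn2real J * dirichlet G))"
    by (rule mult_left_mono) (simp add: less_imp_le)
  moreover have "interaction \<eta>0 \<nu> g = (2 * pi) powi (- int DIM('a)) * Re I"
    unfolding interaction_def I_def X_def ..
  ultimately show ?thesis unfolding L_def J_def by (simp add: mult.assoc)
qed

lemma calE_le_low_frequency_mass:
  fixes \<eta>0 :: "real \<Rightarrow> real" and \<nu> :: "'a::euclidean_space measure"
  assumes sets_\<nu>: "sets \<nu> = sets borel"
    and \<eta>0_nonneg: "\<And>t. \<eta>0 t \<ge> 0" and \<eta>0_meas: "\<eta>0 \<in> borel_measurable borel"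
    and L1: "set_integrable lborel {-1..1} \<eta>0"
    and fin: "(\<integral>\<^sup>+ \<xi>. ennreal (1 / (1 + (norm \<xi>)\<^sup>2)) \<partial>\<nu>) < \<infinity>" and "R > 0"
    and small: "ennreal ((LINT t:{-1..1}|lborel. \<bar>\<eta>0 t\<bar>) * (2 * pi) powi (- int DIM('a)) * 4 * real DIM('a))
             * (\<integral>\<^sup>+ \<xi>. ennreal (indicator {\<xi>. norm \<xi> > R} \<xi> / (norm \<xi>)\<^sup>2) \<partial>\<nu>) < ennreal (1/2)"
  shows "calE \<eta>0 \<nu> \<le> ereal ((LINT t:{-1..1}|lborel. \<bar>\<eta>0 t\<bar>) * (2 * pi) powi (- int DIM('a))
                                * measure \<nu> {\<xi>. norm \<xi> \<le> R})"
proof -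
  define L where "L = (LINT t:{-1..1}|lborel. \<bar>\<eta>0 t\<bar>)"
  define P where "P = (2 * pi) powi (- int DIM('a))"
  define J where "J = (\<integral>\<^sup>+ \<xi>. ennreal (indicator {\<xi>. norm \<xi> > R} \<xi> / (norm \<xi>)\<^sup>2) \<partial>\<nu>)"
  have "L \<ge> 0" unfolding L_def set_lebesgue_integral_def by simp
  have "P > 0" unfolding P_def by (rule zero_less_power_int) simp
  have "J < \<infinity>" unfolding J_def by (rule spectral_tail_finite[OF sets_\<nu> fin \<open>R > 0\<close>])
  \<comment> \<open>the dimension factor only weakens the hypothesis\<close>
  have "real DIM('a) \<ge> 1" using DIM_positive[where 'a='a] by (simp add: Suc_le_eq)
  then have "L * P * 4 * enn2real J * 1 \<le> L * P * 4 * enn2real J * real DIM('a)"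
    using \<open>L \<ge> 0\<close> \<open>P > 0\<close> by (intro mult_left_mono) simp_all
  then have "L * P * 4 * enn2real J \<le> L * P * 4 * real DIM('a) * enn2real J" by (simp add: mult_ac)
  also have "\<dots> < 1/2"
  proof -
    have "ennreal (L * P * 4 * real DIM('a) * enn2real J) = ennreal (L * P * 4 * real DIM('a)) * J"
      using \<open>J < \<infinity>\<close> \<open>L \<ge> 0\<close> \<open>P > 0\<close> by (simp add: ennreal_mult'' ennreal_enn2real_if)
    also have "\<dots> < ennreal (1/2)" using small unfolding L_def P_def J_def .
    finally show ?thesis
      using \<open>L \<ge> 0\<close> \<open>P > 0\<close> by (subst (asm) ennreal_less_iff) simp_all
  qed
  finally have small_real: "L * P * 4 * enn2real J \<le> 1/2" by simp
  show ?thesis unfolding calE_def L_def[symmetric] P_def[symmetric]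
  proof (rule SUP_least, clarify)
    fix g :: "real \<Rightarrow> 'a \<Rightarrow> real" and G :: "real \<Rightarrow> 'a \<Rightarrow> 'a"
    assume "admissible g G"
    then have "interaction \<eta>0 \<nu> g \<le> P * L * (measure \<nu> {\<xi>. norm \<xi> \<le> R} + 4 * enn2real J * dirichlet G)"
      unfolding P_def L_def J_def
      by (rule interaction_le[OF sets_\<nu> \<eta>0_nonneg \<eta>0_meas L1 _ \<open>R > 0\<close>
            spectral_ball_finite[OF sets_\<nu> fin] spectral_tail_finite[OF sets_\<nu> fin \<open>R > 0\<close>]])
    moreover have "L * P * 4 * enn2real J * dirichlet G \<le> 1/2 * dirichlet G"
      using small_real dirichlet_nonneg[of G] by (rule mult_right_mono)
    ultimately have "interaction \<eta>0 \<nu> g - 1/2 * dirichlet G \<le> L * P * measure \<nu> {\<xi>. norm \<xi> \<le> R}"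
      by (simp add: algebra_simps)
    then show "ereal (interaction \<eta>0 \<nu> (fst (g, G)) - 1/2 * dirichlet (snd (g, G)))
        \<le> ereal (L * P * measure \<nu> {\<xi>. norm \<xi> \<le> R})" by simp
  qed
qed

theorem mainTheorem5:
  fixes \<eta>0 :: "real \<Rightarrow> real" and \<nu> :: "'a::euclidean_space measure"
  assumes cov: "covariance_function \<eta>0"
    and L1: "set_integrable lborel {-1..1} \<eta>0"
    and spec: "tempered_measure \<nu>"
    and fin: "(\<integral>\<^sup>+ \<xi>. ennreal (1 / (1 + (norm \<xi>)\<^sup>2)) \<partial>\<nu>) < \<infinity>"
  shows "calE \<eta>0 \<nu> < \<infinity> \<and> (\<forall>R > 0.
           ennreal ((LINT t:{-1..1}|lborel. \<bar>\<eta>0 t\<bar>) * (2 * pi) powi (- int DIM('a)) * 4 * real DIM('a))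
             * (\<integral>\<^sup>+ \<xi>. ennreal (indicator {\<xi>. norm \<xi> > R} \<xi> / (norm \<xi>)\<^sup>2) \<partial>\<nu>) < ennreal (1/2) \<longrightarrow>
           calE \<eta>0 \<nu> \<le> ereal ((LINT t:{-1..1}|lborel. \<bar>\<eta>0 t\<bar>) * (2 * pi) powi (- int DIM('a))
                                * measure \<nu> {\<xi>. norm \<xi> \<le> R}))"
proof -
  have \<eta>0_nonneg: "\<And>t. \<eta>0 t \<ge> 0" and \<eta>0_meas: "\<eta>0 \<in> borel_measurable borel"
    using cov unfolding covariance_function_def locally_integrable_def by auto
  have sets_\<nu>: "sets \<nu> = sets borel" using spec unfolding tempered_measure_def by auto
  note bound = calE_le_low_frequency_mass[OF sets_\<nu> \<eta>0_nonneg \<eta>0_meas L1 fin]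
  have "(LINT t:{-1..1}|lborel. \<bar>\<eta>0 t\<bar>) * (2 * pi) powi (- int DIM('a)) * 4 * real DIM('a) \<ge> 0"
    by (simp add: set_lebesgue_integral_def)
  then obtain R where "R > 0" and "ennreal ((LINT t:{-1..1}|lborel. \<bar>\<eta>0 t\<bar>) * (2 * pi) powi (- int DIM('a))
      * 4 * real DIM('a)) * (\<integral>\<^sup>+ \<xi>. ennreal (indicator {\<xi>. norm \<xi> > R} \<xi> / (norm \<xi>)\<^sup>2) \<partial>\<nu>) < ennreal (1/2)"
    using spectral_tail_small[OF sets_\<nu> fin] by blast
  then have "calE \<eta>0 \<nu> < \<infinity>" by (intro order.strict_trans1[OF bound]) simp_all
  with bound show ?thesis by blast
qed

end
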